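(* Let $V$ be a locally convex space, $\Omega\subset V$ open, and $g$ a Riemannian metric on $\Omega$ admitting a Levi–Civita connection of class $C^k$, $k\ge1$. Then every geodesic of $g$ is $C^{k+2}$.
   Context: All locally convex spaces are real, Hausdorff and sequentially complete. $C^k$ maps: $f$ is $C^1$ if directional derivatives $df(v,\xi)=\lim_{t\to0}(f(v+t\xi)-f(v))/t$ exist and $df$ is continuous; $C^k$ inductively. A Riemannian metric on $\Omega$ is a map $g\colon\Omega\times V\times V\to\mathbb R$ with each $g(v,\cdot,\cdot)$ positive definite symmetric bilinear. A connection on $\Omega\times V\to\Omega$ is $D_\xi\varphi(v)=d\varphi(v,\xi)+A(v,\xi)\varphi(v)$ with $A(v,\xi)$ a continuous linear map $V\to V$, linear in $\xi$, and $(v,\xi,w)\mapsto A(v,\xi)w$ continuous; it is of class $C^k$ if this map is $C^k$. For a $C^1$ metric $g$, a Levi–Civita connection is such a $D$ with $A(v,\xi)\eta=A(v,\eta)\xi$ and $\xi g(\cdot,\varphi,\psi)=g(\cdot,D_\xi\varphi,\psi)+g(\cdot,\varphi,D_\xi\psi)$ for all $\xi\in V$, $\varphi,\psi\in C^1(\Omega,V)$. A geodesic is a $C^2$ curve $x\colon I\to\Omega$ on an interval $I\subset\mathbb R$ with $\frac{d^2x}{dt^2}+A\big(x,\frac{dx}{dt}\big)\frac{dx}{dt}=0$. *)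

theory Defs
  imports "HOL-Analysis.Analysis"
begin

definition lcs_axioms :: "'a::{real_vector,topological_space} itself \<Rightarrow> bool" where
  "lcs_axioms _ \<longleftrightarrow>
     \<comment> \<open>addition is continuous\<close>
     (\<forall>U a b. open (U::'a set) \<and> a + b \<in> U \<longrightarrow>
        (\<exists>Ua Ub. open Ua \<and> open Ub \<and> a \<in> Ua \<and> b \<in> Ub \<and> (\<forall>x\<in>Ua. \<forall>y\<in>Ub. x + y \<in> U))) \<and>
     \<comment> \<open>scalar multiplication is continuous\<close>
     (\<forall>U r a. open (U::'a set) \<and> r *\<^sub>R a \<in> U \<longrightarrow>
        (\<exists>R Ua. open (R::real set) \<and> open Ua \<and> r \<in> R \<and> a \<in> Ua \<and> (\<forall>s\<in>R. \<forall>y\<in>Ua. s *\<^sub>R y \<in> U))) \<and>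
     \<comment> \<open>locally convex: convex open neighbourhood basis\<close>
     (\<forall>U x. open (U::'a set) \<and> x \<in> U \<longrightarrow> (\<exists>C. open C \<and> convex C \<and> x \<in> C \<and> C \<subseteq> U)) \<and>
     \<comment> \<open>sequentially complete: every Cauchy sequence converges\<close>
     (\<forall>X::nat \<Rightarrow> 'a.
        (\<forall>U. open U \<and> 0 \<in> U \<longrightarrow> (\<exists>N. \<forall>m\<ge>N. \<forall>n\<ge>N. X m - X n \<in> U))
        \<longrightarrow> (\<exists>l. X \<longlonglongrightarrow> l))"

text \<open>Throughout, V is a type 'a of sort {real_vector,t2_space} (Hausdorff by sort)
  for which lcs_axioms TYPE('a) is assumed.\<close>

text \<open>Continuity of a map U x V^j -> W (product topology, U with the subspace
  topology); points of V^j are represented as lists of length j.\<close>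
definition cont_multi ::
  "'a::topological_space set \<Rightarrow> nat \<Rightarrow> ('a \<Rightarrow> 'a list \<Rightarrow> 'b::topological_space) \<Rightarrow> bool" where
  "cont_multi U j F \<longleftrightarrow>
     (\<forall>v\<in>U. \<forall>xs. length xs = j \<longrightarrow>
        (\<forall>W. open W \<and> F v xs \<in> W \<longrightarrow>
          (\<exists>N Ns. open N \<and> v \<in> N \<and> length Ns = j \<and>
             (\<forall>i<j. open (Ns ! i) \<and> xs ! i \<in> Ns ! i) \<and>
             (\<forall>v'\<in>N \<inter> U. \<forall>ys. length ys = j \<and> (\<forall>i<j. ys ! i \<in> Ns ! i) \<longrightarrow> F v' ys \<in> W))))"

text \<open>f is C^k on the open set U: the iterated directional derivatives
  d^j f(v; xi_1,...,xi_j) exist for j \<le> k and are continuous on U x V^j.\<close>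
definition Ck ::
  "nat \<Rightarrow> ('a::{real_vector,topological_space} \<Rightarrow> 'b::{real_vector,topological_space})
     \<Rightarrow> 'a set \<Rightarrow> bool" where
  "Ck k f U \<longleftrightarrow>
     (\<exists>D :: nat \<Rightarrow> 'a \<Rightarrow> 'a list \<Rightarrow> 'b.
        (\<forall>v\<in>U. D 0 v [] = f v) \<and>
        (\<forall>j<k. \<forall>v\<in>U. \<forall>xs \<eta>. length xs = j \<longrightarrow>
           ((\<lambda>t::real. (1 / t) *\<^sub>R (D j (v + t *\<^sub>R \<eta>) xs - D j v xs))
              \<longlongrightarrow> D (Suc j) v (xs @ [\<eta>])) (at 0)) \<and>
        (\<forall>j\<le>k. cont_multi U j (D j)))"

definition dirderiv ::
  "('a::real_vector \<Rightarrow> 'b::{real_vector,t2_space}) \<Rightarrow> 'a \<Rightarrow> 'a \<Rightarrow> 'b" where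
  "dirderiv f v \<xi> = Lim (at (0::real)) (\<lambda>t. (1 / t) *\<^sub>R (f (v + t *\<^sub>R \<xi>) - f v))"

definition riemannian_metric :: "'a::{real_vector,t2_space} set \<Rightarrow> ('a \<Rightarrow> 'a \<Rightarrow> 'a \<Rightarrow> real) \<Rightarrow> bool" where
  "riemannian_metric \<Omega> g \<longleftrightarrow>
     (\<forall>v\<in>\<Omega>. (\<forall>\<xi>. linear (g v \<xi>)) \<and> (\<forall>\<xi> \<eta>. g v \<xi> \<eta> = g v \<eta> \<xi>) \<and>
             (\<forall>\<xi>. \<xi> \<noteq> 0 \<longrightarrow> g v \<xi> \<xi> > 0))"

text \<open>A connection D_xi phi (v) = d phi(v,xi) + A(v,xi) phi(v), given by A v xi w = A(v,xi)w.\<close>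
definition connection :: "'a::{real_vector,t2_space} set \<Rightarrow> ('a \<Rightarrow> 'a \<Rightarrow> 'a \<Rightarrow> 'a) \<Rightarrow> bool" where
  "connection \<Omega> A \<longleftrightarrow>
     (\<forall>v\<in>\<Omega>. \<forall>\<xi>. linear (A v \<xi>) \<and> continuous_on UNIV (A v \<xi>)) \<and>
     (\<forall>v\<in>\<Omega>. \<forall>w. linear (\<lambda>\<xi>. A v \<xi> w)) \<and>
     continuous_on (\<Omega> \<times> UNIV \<times> UNIV) (\<lambda>(v, \<xi>, w). A v \<xi> w)"

definition covderiv :: "('a::{real_vector,t2_space} \<Rightarrow> 'a \<Rightarrow> 'a \<Rightarrow> 'a) \<Rightarrow> 'a \<Rightarrow> ('a \<Rightarrow> 'a) \<Rightarrow> 'a \<Rightarrow> 'a" where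
  "covderiv A \<xi> \<phi> v = dirderiv \<phi> v \<xi> + A v \<xi> (\<phi> v)"

definition connection_Ck :: "nat \<Rightarrow> 'a::{real_vector,t2_space} set \<Rightarrow> ('a \<Rightarrow> 'a \<Rightarrow> 'a \<Rightarrow> 'a) \<Rightarrow> bool" where
  "connection_Ck k \<Omega> A \<longleftrightarrow> Ck k (\<lambda>(v, \<xi>, w). A v \<xi> w) (\<Omega> \<times> UNIV \<times> UNIV)"

definition metric_Ck :: "nat \<Rightarrow> 'a::{real_vector,t2_space} set \<Rightarrow> ('a \<Rightarrow> 'a \<Rightarrow> 'a \<Rightarrow> real) \<Rightarrow> bool" where
  "metric_Ck k \<Omega> g \<longleftrightarrow> Ck k (\<lambda>(v, \<xi>, \<eta>). g v \<xi> \<eta>) (\<Omega> \<times> UNIV \<times> UNIV)"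

definition levi_civita :: "'a::{real_vector,t2_space} set \<Rightarrow> ('a \<Rightarrow> 'a \<Rightarrow> 'a \<Rightarrow> real) \<Rightarrow> ('a \<Rightarrow> 'a \<Rightarrow> 'a \<Rightarrow> 'a) \<Rightarrow> bool" where
  "levi_civita \<Omega> g A \<longleftrightarrow>
     connection \<Omega> A \<and>
     (\<forall>v\<in>\<Omega>. \<forall>\<xi> \<eta>. A v \<xi> \<eta> = A v \<eta> \<xi>) \<and>
     (\<forall>\<xi> \<phi> \<psi>. Ck 1 \<phi> \<Omega> \<and> Ck 1 \<psi> \<Omega> \<longrightarrow>
        (\<forall>v\<in>\<Omega>.
           ((\<lambda>t::real. (1 / t) * (g (v + t *\<^sub>R \<xi>) (\<phi> (v + t *\<^sub>R \<xi>)) (\<psi> (v + t *\<^sub>R \<xi>))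
                                   - g v (\<phi> v) (\<psi> v)))
             \<longlongrightarrow> g v (covderiv A \<xi> \<phi> v) (\<psi> v) + g v (\<phi> v) (covderiv A \<xi> \<psi> v)) (at 0)))"

text \<open>X 0, ..., X k are x and its successive derivatives on the interval I
  (one-sided at endpoints belonging to I), all continuous on I.\<close>
definition curve_derivs :: "nat \<Rightarrow> (nat \<Rightarrow> real \<Rightarrow> 'a::{real_vector,t2_space}) \<Rightarrow> (real \<Rightarrow> 'a) \<Rightarrow> real set \<Rightarrow> bool" where
  "curve_derivs k X x I \<longleftrightarrow>
     (\<forall>t\<in>I. X 0 t = x t) \<and>
     (\<forall>j<k. \<forall>t\<in>I. ((\<lambda>s. (1 / (s - t)) *\<^sub>R (X j s - X j t)) \<longlongrightarrow> X (Suc j) t) (at t within I)) \<and>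
     (\<forall>j\<le>k. continuous_on I (X j))"

definition curve_Ck :: "nat \<Rightarrow> (real \<Rightarrow> 'a::{real_vector,t2_space}) \<Rightarrow> real set \<Rightarrow> bool" where
  "curve_Ck k x I \<longleftrightarrow> (\<exists>X. curve_derivs k X x I)"

definition geodesic :: "'a::{real_vector,t2_space} set \<Rightarrow> ('a \<Rightarrow> 'a \<Rightarrow> 'a \<Rightarrow> 'a) \<Rightarrow> real set \<Rightarrow> (real \<Rightarrow> 'a) \<Rightarrow> bool" where
  "geodesic \<Omega> A I x \<longleftrightarrow>
     is_interval I \<and> (\<forall>t\<in>I. x t \<in> \<Omega>) \<and>
     (\<exists>X. curve_derivs 2 X x I \<and> (\<forall>t\<in>I. X 2 t + A (x t) (X 1 t) (X 1 t) = 0))"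

end

theory Submission
  imports Defs
begin

text \<open>A geodesic solves \<open>x'' = - A(x, x', x')\<close>. If \<open>x\<close> is \<open>C\<^sup>m\<close> with \<open>m \<ge> 2\<close>, the curve
  \<open>(x, x', x')\<close> is \<open>C\<^sup>m\<^sup>-\<^sup>1\<close>, and composing a \<open>C\<^sup>k\<close> map with a \<open>C\<^sup>n\<close> curve gives a \<open>C\<^sup>n\<close>
  curve for \<open>n \<le> k\<close>; so \<open>x''\<close> is \<open>C\<^sup>m\<^sup>-\<^sup>1\<close> and \<open>x\<close> is \<open>C\<^sup>m\<^sup>+\<^sup>1\<close> as long as \<open>m - 1 \<le> k\<close>, which
  bootstraps up to \<open>C\<^sup>k\<^sup>+\<^sup>2\<close>.

  The chain rule behind the composition step is the product rule
  \<open>d/ds d\<^sup>iA(\<gamma>; c\<^sub>1, \<dots>, c\<^sub>i) = d\<^sup>i\<^sup>+\<^sup>1A(\<gamma>; c\<^sub>1, \<dots>, c\<^sub>i, \<gamma>') + \<Sum>\<^sub>l d\<^sup>iA(\<gamma>; \<dots>, c\<^sub>l', \<dots>)\<close>, whose first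
  term needs the difference quotients of \<open>d\<^sup>iA\<close> to converge jointly in base point, direction and
  increment. In a locally convex space this follows from the mean value theorem in the form
  "increments lie in the closed convex hull of the derivatives", proved by continuous induction
  without Hahn--Banach.\<close>

text \<open>The topology of \<open>'w\<close> is unrelated to its vector structure, so the library's limit rules
  for \<open>+\<close> and \<open>*\<^sub>R\<close> (which need a norm) are unavailable; continuity of the operations is assumed.\<close>

definition tvs_axioms :: "'w::{real_vector,t2_space} itself \<Rightarrow> bool" where
  "tvs_axioms _ \<longleftrightarrow>
     (\<forall>p. isCont (\<lambda>z::'w \<times> 'w. fst z + snd z) p) \<and> (\<forall>p. isCont (\<lambda>z::real \<times> 'w. fst z *\<^sub>R snd z) p)"

lemma tvs_tendsto_add:
  fixes f g :: "'b \<Rightarrow> 'w::{real_vector,t2_space}"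
  assumes "tvs_axioms TYPE('w)" "(f \<longlongrightarrow> a) F" "(g \<longlongrightarrow> b) F"
  shows "((\<lambda>x. f x + g x) \<longlongrightarrow> a + b) F"
  using isCont_tendsto_compose[OF _ tendsto_Pair[OF assms(2,3)], of "\<lambda>z. fst z + snd z"] assms(1)
  unfolding tvs_axioms_def by simp

lemma tvs_tendsto_scaleR:
  fixes f :: "'b \<Rightarrow> 'w::{real_vector,t2_space}"
  assumes "tvs_axioms TYPE('w)" "(r \<longlongrightarrow> c) F" "(f \<longlongrightarrow> a) F"
  shows "((\<lambda>x. r x *\<^sub>R f x) \<longlongrightarrow> c *\<^sub>R a) F"
  using isCont_tendsto_compose[OF _ tendsto_Pair[OF assms(2,3)], of "\<lambda>z. fst z *\<^sub>R snd z"] assms(1)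
  unfolding tvs_axioms_def by simp

lemma tvs_tendsto_minus:
  fixes f :: "'b \<Rightarrow> 'w::{real_vector,t2_space}"
  assumes "tvs_axioms TYPE('w)" "(f \<longlongrightarrow> a) F"
  shows "((\<lambda>x. - f x) \<longlongrightarrow> - a) F"
  using tvs_tendsto_scaleR[OF assms(1) tendsto_const assms(2), of "-1"] by simp

lemma tvs_tendsto_diff:
  fixes f g :: "'b \<Rightarrow> 'w::{real_vector,t2_space}"
  assumes "tvs_axioms TYPE('w)" "(f \<longlongrightarrow> a) F" "(g \<longlongrightarrow> b) F"
  shows "((\<lambda>x. f x - g x) \<longlongrightarrow> a - b) F"
  using tvs_tendsto_add[OF assms(1,2) tvs_tendsto_minus[OF assms(1,3)]] by simp

lemma tvs_tendsto_sum:
  fixes f :: "'i \<Rightarrow> 'b \<Rightarrow> 'w::{real_vector,t2_space}"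
  assumes "tvs_axioms TYPE('w)" "finite S" "\<And>i. i \<in> S \<Longrightarrow> (f i \<longlongrightarrow> a i) F"
  shows "((\<lambda>x. \<Sum>i\<in>S. f i x) \<longlongrightarrow> (\<Sum>i\<in>S. a i)) F"
  using assms(2,3) by (induction S rule: finite_induct) (simp_all add: tvs_tendsto_add[OF assms(1)])

lemma tvs_continuous_on_add:
  fixes f g :: "real \<Rightarrow> 'w::{real_vector,t2_space}"
  assumes "tvs_axioms TYPE('w)" "continuous_on I f" "continuous_on I g"
  shows "continuous_on I (\<lambda>s. f s + g s)"
  using assms unfolding continuous_on_def by (auto intro: tvs_tendsto_add)

lemma tvs_continuous_on_minus:
  fixes f :: "real \<Rightarrow> 'w::{real_vector,t2_space}"
  assumes "tvs_axioms TYPE('w)" "continuous_on I f"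
  shows "continuous_on I (\<lambda>s. - f s)"
  using assms unfolding continuous_on_def by (auto intro: tvs_tendsto_minus)

lemma tvs_eventually_line_in_open:
  fixes v \<eta> :: "'w::{real_vector,t2_space}"
  assumes "tvs_axioms TYPE('w)" "open U" "v \<in> U"
  shows "eventually (\<lambda>t::real. v + t *\<^sub>R \<eta> \<in> U) (at 0)"
proof -
  have "((\<lambda>t::real. v + t *\<^sub>R \<eta>) \<longlongrightarrow> v + 0 *\<^sub>R \<eta>) (at 0)"
    by (intro tvs_tendsto_add[OF assms(1)] tvs_tendsto_scaleR[OF assms(1)] tendsto_const tendsto_ident_at)
  then show ?thesis using assms(2,3) by (intro topological_tendstoD) auto
qed

lemma tvs_continuous_of_diffquot:
  fixes \<psi> :: "real \<Rightarrow> 'w::{real_vector,t2_space}"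
  assumes tv: "tvs_axioms TYPE('w)"
    and der: "((\<lambda>\<sigma>. (1 / \<sigma>) *\<^sub>R (\<psi> (\<tau> + \<sigma>) - \<psi> \<tau>)) \<longlongrightarrow> d) (at 0)"
  shows "(\<psi> \<longlongrightarrow> \<psi> \<tau>) (at \<tau>)"
proof -
  have "((\<lambda>\<sigma>. \<sigma> *\<^sub>R ((1 / \<sigma>) *\<^sub>R (\<psi> (\<tau> + \<sigma>) - \<psi> \<tau>)) + \<psi> \<tau>) \<longlongrightarrow> 0 *\<^sub>R d + \<psi> \<tau>) (at 0)"
    by (intro tvs_tendsto_add[OF tv] tvs_tendsto_scaleR[OF tv] der tendsto_ident_at tendsto_const)
  then have "((\<lambda>\<sigma>. \<sigma> *\<^sub>R ((1 / \<sigma>) *\<^sub>R (\<psi> (\<tau> + \<sigma>) - \<psi> \<tau>)) + \<psi> \<tau>) \<longlongrightarrow> \<psi> \<tau>) (at 0)"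
    by simp
  then have "((\<lambda>\<sigma>. \<psi> (\<tau> + \<sigma>)) \<longlongrightarrow> \<psi> \<tau>) (at 0)"
    by (rule Lim_transform_eventually) (auto simp: eventually_at_filter)
  then show ?thesis by (subst LIM_offset_zero_iff) auto
qed

lemma tendsto_compose_scale_at_0:
  fixes f :: "real \<Rightarrow> 'b::topological_space"
  assumes "(f \<longlongrightarrow> L) (at 0)" "c \<noteq> 0"
  shows "((\<lambda>t. f (c * t)) \<longlongrightarrow> L) (at 0)"
proof -
  have "filterlim (\<lambda>t. c * t) (at 0) (at (0::real))"
    unfolding filterlim_at using assms(2)
    by (auto simp: eventually_at_filter intro: tendsto_mult_right_zero tendsto_ident_at)
  from filterlim_compose[OF assms(1) this] show ?thesis .
qed

lemma lcs_imp_tvs: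
  assumes "lcs_axioms TYPE('a::{real_vector,t2_space})"
  shows "tvs_axioms TYPE('a)"
  unfolding tvs_axioms_def
proof safe
  fix p :: "'a \<times> 'a"
  show "isCont (\<lambda>z::'a \<times> 'a. fst z + snd z) p"
    unfolding continuous_at
  proof (rule topological_tendstoI)
    fix W assume "open W" "fst p + snd p \<in> W"
    then obtain Ua Ub where "open Ua" "open Ub" "fst p \<in> Ua" "snd p \<in> Ub" "\<forall>x\<in>Ua. \<forall>y\<in>Ub. x + y \<in> W"
      using assms unfolding lcs_axioms_def by meson
    then show "\<forall>\<^sub>F x in at p. fst x + snd x \<in> W"
      unfolding eventually_at_topological by (intro exI[of _ "Ua \<times> Ub"]) (auto intro: open_Times simp: mem_Times_iff)
  qed
next
  fix p :: "real \<times> 'a"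
  show "isCont (\<lambda>z::real \<times> 'a. fst z *\<^sub>R snd z) p"
    unfolding continuous_at
  proof (rule topological_tendstoI)
    fix W assume "open W" "fst p *\<^sub>R snd p \<in> W"
    then obtain R Ua where "open R" "open Ua" "fst p \<in> R" "snd p \<in> Ua" "\<forall>s\<in>R. \<forall>y\<in>Ua. s *\<^sub>R y \<in> W"
      using assms unfolding lcs_axioms_def by meson
    then show "\<forall>\<^sub>F x in at p. fst x *\<^sub>R snd x \<in> W"
      unfolding eventually_at_topological by (intro exI[of _ "R \<times> Ua"]) (auto intro: open_Times simp: mem_Times_iff)
  qed
qed

lemma tvs_axioms_prod:
  assumes "tvs_axioms TYPE('b::{real_vector,t2_space})" "tvs_axioms TYPE('c::{real_vector,t2_space})"
  shows "tvs_axioms TYPE('b \<times> 'c)"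
  unfolding tvs_axioms_def
proof safe
  fix p :: "('b \<times> 'c) \<times> ('b \<times> 'c)"
  have "((\<lambda>z. (fst (fst z) + fst (snd z), snd (fst z) + snd (snd z))) \<longlongrightarrow>
          (fst (fst p) + fst (snd p), snd (fst p) + snd (snd p))) (at p)"
    by (intro tendsto_Pair tvs_tendsto_add[OF assms(1)] tvs_tendsto_add[OF assms(2)]
        tendsto_fst tendsto_snd tendsto_ident_at)
  then show "isCont (\<lambda>z::('b \<times> 'c) \<times> ('b \<times> 'c). fst z + snd z) p"
    unfolding continuous_at by (simp add: plus_prod_def)
next
  fix p :: "real \<times> ('b \<times> 'c)"
  have "((\<lambda>z. (fst z *\<^sub>R fst (snd z), fst z *\<^sub>R snd (snd z))) \<longlongrightarrow>
          (fst p *\<^sub>R fst (snd p), fst p *\<^sub>R snd (snd p))) (at p)"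
    by (intro tendsto_Pair tvs_tendsto_scaleR[OF assms(1)] tvs_tendsto_scaleR[OF assms(2)]
        tendsto_fst tendsto_snd tendsto_ident_at)
  then show "isCont (\<lambda>z::real \<times> ('b \<times> 'c). fst z *\<^sub>R snd z) p"
    unfolding continuous_at by (simp add: scaleR_prod_def)
qed

lemma tvs_segment_nhd:
  fixes a b :: "'w::{real_vector,t2_space}"
  assumes tw: "tvs_axioms TYPE('w)" and N: "open N" "a \<in> N"
  obtains P \<delta> Q where "open P" "a \<in> P" "\<delta> > 0" "open Q" "b \<in> Q"
    "\<And>p s u. p \<in> P \<Longrightarrow> \<bar>s\<bar> < \<delta> \<Longrightarrow> u \<in> Q \<Longrightarrow> p + s *\<^sub>R u \<in> N"
proof -
  let ?z = "(a, (0::real, b))"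
  have z: "((\<lambda>z. z) \<longlongrightarrow> ?z) (nhds ?z)" by (rule filterlim_ident)
  have "((\<lambda>z. fst z + fst (snd z) *\<^sub>R snd (snd z)) \<longlongrightarrow> a + 0 *\<^sub>R b) (nhds ?z)"
    using tendsto_fst[OF z] tendsto_fst[OF tendsto_snd[OF z]] tendsto_snd[OF tendsto_snd[OF z]]
    by (intro tvs_tendsto_add[OF tw] tvs_tendsto_scaleR[OF tw]) auto
  then have "eventually (\<lambda>z. fst z + fst (snd z) *\<^sub>R snd (snd z) \<in> N) (nhds ?z)"
    using N by (intro topological_tendstoD) auto
  then obtain S where S: "open S" "?z \<in> S" "\<forall>z\<in>S. fst z + fst (snd z) *\<^sub>R snd (snd z) \<in> N"
    unfolding eventually_nhds by blast
  obtain P B where PB: "open P" "open B" "?z \<in> P \<times> B" "P \<times> B \<subseteq> S"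
    using open_prod_elim[OF S(1,2)] by blast
  obtain R Q where RQ: "open R" "open Q" "(0::real, b) \<in> R \<times> Q" "R \<times> Q \<subseteq> B"
    using open_prod_elim[OF PB(2)] PB(3) by blast
  obtain \<delta> where \<delta>: "\<delta> > 0" "ball 0 \<delta> \<subseteq> R"
    using openE[OF RQ(1)] RQ(3) by blast
  show ?thesis
  proof (rule that[OF PB(1) _ \<delta>(1) RQ(2)])
    fix p s u assume "p \<in> P" "\<bar>s\<bar> < \<delta>" "u \<in> Q"
    then have "s \<in> R" using \<delta>(2) by (auto simp: dist_real_def)
    then have "(p, (s, u)) \<in> S" using \<open>p \<in> P\<close> \<open>u \<in> Q\<close> RQ(4) PB(4) by blast
    then show "p + s *\<^sub>R u \<in> N" using S(3) by fastforce
  qed (use PB(3) RQ(3) in auto)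
qed

lemma lcs_open_translate:
  assumes "lcs_axioms TYPE('v::{real_vector,t2_space})" "open (S::'v set)"
  shows "open {y. c + y \<in> S}"
  unfolding open_subopen[of "{y. c + y \<in> S}"]
proof
  fix y assume "y \<in> {y. c + y \<in> S}"
  then obtain Ua Ub where "open Ua" "open Ub" "c \<in> Ua" "y \<in> Ub" "\<forall>x\<in>Ua. \<forall>z\<in>Ub. x + z \<in> S"
    using assms unfolding lcs_axioms_def by (metis mem_Collect_eq)
  then show "\<exists>T. open T \<and> y \<in> T \<and> T \<subseteq> {y. c + y \<in> S}" by (intro exI[of _ Ub]) auto
qed

lemma lcs_open_scaleR_preimage:
  assumes "lcs_axioms TYPE('v::{real_vector,t2_space})" "open (S::'v set)"
  shows "open {y. r *\<^sub>R y \<in> S}"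
  unfolding open_subopen[of "{y. r *\<^sub>R y \<in> S}"]
proof
  fix y assume "y \<in> {y. r *\<^sub>R y \<in> S}"
  then obtain R Ua where "open R" "open Ua" "r \<in> R" "y \<in> Ua" "\<forall>s\<in>R. \<forall>z\<in>Ua. s *\<^sub>R z \<in> S"
    using assms unfolding lcs_axioms_def by (metis mem_Collect_eq)
  then show "\<exists>T. open T \<and> y \<in> T \<and> T \<subseteq> {y. r *\<^sub>R y \<in> S}" by (intro exI[of _ Ua]) auto
qed

lemma closure_meets_open:
  assumes "x \<in> closure C" "open S" "x \<in> S"
  obtains a where "a \<in> C" "a \<in> S"
  using assms unfolding closure_iff_nhds_not_empty by blast

lemma lcs_convex_closure:
  assumes lcs: "lcs_axioms TYPE('v::{real_vector,t2_space})" and "convex (C::'v set)"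
  shows "convex (closure C)"
proof (rule convexI)
  fix x y :: 'v and u v :: real
  assume xy: "x \<in> closure C" "y \<in> closure C" "0 \<le> u" "0 \<le> v" "u + v = 1"
  show "u *\<^sub>R x + v *\<^sub>R y \<in> closure C"
    unfolding closure_iff_nhds_not_empty
  proof (intro allI impI)
    fix A S assume S: "S \<subseteq> A" "open S" "u *\<^sub>R x + v *\<^sub>R y \<in> S"
    then obtain Ua Ub where U: "open Ua" "open Ub" "u *\<^sub>R x \<in> Ua" "v *\<^sub>R y \<in> Ub"
      "\<forall>a\<in>Ua. \<forall>b\<in>Ub. a + b \<in> S"
      using lcs unfolding lcs_axioms_def by meson
    obtain a where a: "a \<in> C" "u *\<^sub>R a \<in> Ua"
      using closure_meets_open[OF xy(1) lcs_open_scaleR_preimage[OF lcs U(1), of u]] U(3) by auto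
    obtain b where b: "b \<in> C" "v *\<^sub>R b \<in> Ub"
      using closure_meets_open[OF xy(2) lcs_open_scaleR_preimage[OF lcs U(2), of v]] U(4) by auto
    have "u *\<^sub>R a + v *\<^sub>R b \<in> C" using assms(2) a b xy by (simp add: convexD)
    moreover have "u *\<^sub>R a + v *\<^sub>R b \<in> S" using U a b by blast
    ultimately show "C \<inter> A \<noteq> {}" using S by blast
  qed
qed

lemma lcs_convex_nhd_closure:
  assumes lcs: "lcs_axioms TYPE('v::{real_vector,t2_space})" and "open E" "(L::'v) \<in> E"
  obtains W where "open W" "convex W" "0 \<in> W" "\<And>z. z \<in> closure W \<Longrightarrow> L + z \<in> E"
proof -
  let ?E0 = "{y. L + y \<in> E}"
  have "open ?E0" "0 + 0 \<in> ?E0" using lcs_open_translate[OF lcs assms(2)] assms(3) by auto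
  then obtain Ua Ub where U: "open Ua" "open Ub" "0 \<in> Ua" "0 \<in> Ub" "\<forall>a\<in>Ua. \<forall>b\<in>Ub. a + b \<in> ?E0"
    using lcs unfolding lcs_axioms_def by meson
  then obtain W where W: "open W" "convex W" "0 \<in> W" "W \<subseteq> Ua \<inter> Ub"
    using lcs unfolding lcs_axioms_def by (metis IntI open_Int)
  show ?thesis
  proof (rule that[OF W(1-3)])
    fix z assume z: "z \<in> closure W"
    \<comment> \<open>a point of \<open>W\<close> close to \<open>z\<close> splits \<open>z\<close> as a sum \<open>Ua + Ub\<close>\<close>
    let ?S = "{y. (-1) *\<^sub>R y \<in> {w. z + w \<in> Ub}}"
    have "open ?S" by (intro lcs_open_scaleR_preimage lcs_open_translate lcs U(2))
    moreover have "z \<in> ?S" using U(4) by simp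
    ultimately obtain y where y: "y \<in> W" "y \<in> ?S" using closure_meets_open[OF z] by blast
    then have "y \<in> Ua" "z - y \<in> Ub" using W(4) by auto
    then have "y + (z - y) \<in> ?E0" using U(5) by blast
    then show "L + z \<in> E" by simp
  qed
qed

lemma scaled_set_left_limit:
  fixes \<psi> :: "real \<Rightarrow> 'v::{real_vector,t2_space}"
  assumes tv: "tvs_axioms TYPE('v)" and "closed K" "T > 0" "(\<psi> \<longlongrightarrow> \<psi> T) (at T)"
    and below: "\<And>\<sigma>. 0 < \<sigma> \<Longrightarrow> \<sigma> < T \<Longrightarrow> \<psi> \<sigma> - \<psi> 0 \<in> (*\<^sub>R) \<sigma> ` K"
  shows "\<psi> T - \<psi> 0 \<in> (*\<^sub>R) T ` K"
proof -
  define \<phi> where "\<phi> \<sigma> = (1 / \<sigma>) *\<^sub>R (\<psi> \<sigma> - \<psi> 0)" for \<sigma>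
  have "((\<lambda>\<sigma>. 1 / \<sigma>) \<longlongrightarrow> 1 / T) (at T)" using \<open>T > 0\<close> by (intro tendsto_intros) auto
  then have "(\<phi> \<longlongrightarrow> \<phi> T) (at T)" unfolding \<phi>_def
    by (intro tvs_tendsto_scaleR[OF tv] tvs_tendsto_diff[OF tv] tendsto_const assms(4))
  then have "(\<phi> \<longlongrightarrow> \<phi> T) (at_left T)" by (simp add: filterlim_at_split)
  moreover have "eventually (\<lambda>\<sigma>. \<phi> \<sigma> \<in> K) (at_left T)"
    using eventually_at_left_real[OF \<open>T > 0\<close>]
  proof eventually_elim
    case (elim \<sigma>)
    then obtain k where "k \<in> K" "\<psi> \<sigma> - \<psi> 0 = \<sigma> *\<^sub>R k" using below by force
    then show ?case using elim unfolding \<phi>_def by simp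
  qed
  ultimately have "\<phi> T \<in> K" using \<open>closed K\<close> by (intro Lim_in_closed_set) auto
  moreover have "\<psi> T - \<psi> 0 = T *\<^sub>R \<phi> T" unfolding \<phi>_def using \<open>T > 0\<close> by simp
  ultimately show ?thesis by blast
qed

lemma scaled_convex_set_step:
  fixes \<psi> :: "real \<Rightarrow> 'v::real_vector"
  assumes "convex K" "T \<ge> 0" "r > 0" "\<psi> T - \<psi> 0 \<in> (*\<^sub>R) T ` K"
    and "(1 / r) *\<^sub>R (\<psi> (T + r) - \<psi> T) \<in> K"
  shows "\<psi> (T + r) - \<psi> 0 \<in> (*\<^sub>R) (T + r) ` K"
proof -
  define q where "q = (1 / r) *\<^sub>R (\<psi> (T + r) - \<psi> T)"
  obtain k where k: "k \<in> K" "\<psi> T - \<psi> 0 = T *\<^sub>R k" using assms(4) by auto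
  have "(r / (T + r)) *\<^sub>R q + (T / (T + r)) *\<^sub>R k \<in> K"
    using assms k(1) unfolding q_def by (intro convexD) (auto simp: add_divide_distrib[symmetric])
  moreover have "\<psi> (T + r) - \<psi> 0 = (T + r) *\<^sub>R ((r / (T + r)) *\<^sub>R q + (T / (T + r)) *\<^sub>R k)"
    using assms(2,3) k(2) unfolding q_def by (simp add: scaleR_add_right algebra_simps)
  ultimately show ?thesis by blast
qed

lemma scaled_convex_set_right_extension:
  fixes \<psi> :: "real \<Rightarrow> 'v::{real_vector,t2_space}"
  assumes "convex K" "C \<subseteq> K" "open C" "T \<ge> 0" "\<psi> T - \<psi> 0 \<in> (*\<^sub>R) T ` K"
    and "((\<lambda>\<sigma>. (1 / \<sigma>) *\<^sub>R (\<psi> (T + \<sigma>) - \<psi> T)) \<longlongrightarrow> d) (at 0)" "d \<in> C"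
  obtains \<epsilon> where "\<epsilon> > 0" "\<And>\<sigma>. T < \<sigma> \<Longrightarrow> \<sigma> < T + \<epsilon> \<Longrightarrow> \<psi> \<sigma> - \<psi> 0 \<in> (*\<^sub>R) \<sigma> ` K"
proof -
  have "eventually (\<lambda>\<sigma>. (1 / \<sigma>) *\<^sub>R (\<psi> (T + \<sigma>) - \<psi> T) \<in> C) (at 0)"
    using topological_tendstoD[OF assms(6,3,7)] .
  then obtain \<epsilon> where \<epsilon>: "\<epsilon> > 0"
      "\<And>\<sigma>. \<sigma> \<noteq> 0 \<Longrightarrow> dist \<sigma> 0 < \<epsilon> \<Longrightarrow> (1 / \<sigma>) *\<^sub>R (\<psi> (T + \<sigma>) - \<psi> T) \<in> C"
    unfolding eventually_at by auto
  show ?thesis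
  proof (rule that[OF \<epsilon>(1)])
    fix \<sigma> assume "T < \<sigma>" "\<sigma> < T + \<epsilon>"
    then have "(1 / (\<sigma> - T)) *\<^sub>R (\<psi> (T + (\<sigma> - T)) - \<psi> T) \<in> K"
      using \<epsilon>(2)[of "\<sigma> - T"] assms(2) by (auto simp: dist_real_def)
    from scaled_convex_set_step[OF assms(1,4) _ assms(5) this] \<open>T < \<sigma>\<close>
    show "\<psi> \<sigma> - \<psi> 0 \<in> (*\<^sub>R) \<sigma> ` K" by simp
  qed
qed

text \<open>Continuous induction on the invariant \<open>\<psi> \<sigma> - \<psi> 0 \<in> \<sigma> \<cdot> closure C\<close>, \<open>\<sigma> \<in> [0, 1]\<close>.\<close>

lemma lcs_mean_value_closure:
  fixes \<psi> :: "real \<Rightarrow> 'v::{real_vector,t2_space}"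
  assumes lcs: "lcs_axioms TYPE('v)" and C: "convex C" "open C"
    and der: "\<And>\<tau>. \<tau> \<in> {0..1} \<Longrightarrow> ((\<lambda>\<sigma>. (1 / \<sigma>) *\<^sub>R (\<psi> (\<tau> + \<sigma>) - \<psi> \<tau>)) \<longlongrightarrow> d \<tau>) (at 0)"
    and dC: "\<And>\<tau>. \<tau> \<in> {0..1} \<Longrightarrow> d \<tau> \<in> C"
  shows "\<psi> 1 - \<psi> 0 \<in> closure C"
proof -
  have tv: "tvs_axioms TYPE('v)" by (rule lcs_imp_tvs[OF lcs])
  define K where "K = closure C"
  have K: "convex K" "closed K" "C \<subseteq> K" "K \<noteq> {}"
    using lcs_convex_closure[OF lcs C(1)] closure_subset dC[of 0] unfolding K_def by auto
  define S where "S = {\<tau> \<in> {0..1}. \<forall>\<sigma> \<in> {0..\<tau>}. \<psi> \<sigma> - \<psi> 0 \<in> (*\<^sub>R) \<sigma> ` K}"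
  have zero: "\<psi> 0 - \<psi> 0 \<in> (*\<^sub>R) 0 ` K" using K(4) by auto
  then have "0 \<in> S" unfolding S_def by auto
  have Sb: "bdd_above S" by (rule bdd_aboveI[of _ 1]) (auto simp: S_def)
  define T where "T = Sup S"
  have T: "0 \<le> T" "T \<le> 1"
    unfolding T_def using cSup_upper[OF \<open>0 \<in> S\<close> Sb] \<open>0 \<in> S\<close>
    by (auto intro!: cSup_least) (auto simp: S_def)
  have below: "\<psi> \<sigma> - \<psi> 0 \<in> (*\<^sub>R) \<sigma> ` K" if "0 \<le> \<sigma>" "\<sigma> < T" for \<sigma>
  proof -
    obtain \<tau> where "\<tau> \<in> S" "\<sigma> < \<tau>" using less_cSup_iff[of S \<sigma>] \<open>0 \<in> S\<close> Sb \<open>\<sigma> < T\<close> T_def by blast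
    then show ?thesis using that unfolding S_def by auto
  qed
  have at_T: "\<psi> T - \<psi> 0 \<in> (*\<^sub>R) T ` K"
  proof (cases "T = 0")
    case False
    show ?thesis
    proof (rule scaled_set_left_limit[OF tv K(2)])
      show "(\<psi> \<longlongrightarrow> \<psi> T) (at T)" using tvs_continuous_of_diffquot[OF tv der] T by simp
    qed (use False T below in auto)
  qed (use zero in simp)
  have upto_T: "\<psi> \<sigma> - \<psi> 0 \<in> (*\<^sub>R) \<sigma> ` K" if "\<sigma> \<in> {0..T}" for \<sigma>
    using that below at_T by (cases "\<sigma> = T") auto
  have "T = 1"
  proof (rule ccontr)
    assume "T \<noteq> 1"
    obtain \<epsilon> where \<epsilon>: "\<epsilon> > 0" "\<And>\<sigma>. T < \<sigma> \<Longrightarrow> \<sigma> < T + \<epsilon> \<Longrightarrow> \<psi> \<sigma> - \<psi> 0 \<in> (*\<^sub>R) \<sigma> ` K"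
      using scaled_convex_set_right_extension[OF K(1,3) C(2) T(1) at_T der dC] T by auto
    define s where "s = min (\<epsilon> / 2) (1 - T)"
    have s: "s > 0" "s < \<epsilon>" "T + s \<le> 1" unfolding s_def using \<epsilon>(1) T \<open>T \<noteq> 1\<close> by auto
    have "\<psi> \<sigma> - \<psi> 0 \<in> (*\<^sub>R) \<sigma> ` K" if "\<sigma> \<in> {0..T + s}" for \<sigma>
      using that upto_T \<epsilon>(2) s by (cases "\<sigma> \<le> T") auto
    then have "T + s \<in> S" using s T unfolding S_def by simp
    then have "T + s \<le> T" unfolding T_def using Sb by (rule cSup_upper)
    then show False using s by simp
  qed
  then have "\<psi> 1 - \<psi> 0 \<in> K" using upto_T[of 1] by simp
  then show ?thesis unfolding K_def .
qed

lemma lcs_diffquot_in_closure: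
  fixes G :: "'w::real_vector \<Rightarrow> 'v::{real_vector,t2_space}"
  assumes lcs: "lcs_axioms TYPE('v)" and W: "convex W" "open W" and "h \<noteq> 0"
    and der: "\<And>\<tau>. \<tau> \<in> {0..1} \<Longrightarrow>
      ((\<lambda>\<sigma>. (1 / \<sigma>) *\<^sub>R (G (p + (\<tau> * h) *\<^sub>R u + \<sigma> *\<^sub>R u) - G (p + (\<tau> * h) *\<^sub>R u))) \<longlongrightarrow> G' \<tau>) (at 0)"
    and G'W: "\<And>\<tau>. \<tau> \<in> {0..1} \<Longrightarrow> G' \<tau> - L \<in> W"
  shows "(1 / h) *\<^sub>R (G (p + h *\<^sub>R u) - G p) - L \<in> closure W"
proof -
  have tv: "tvs_axioms TYPE('v)" by (rule lcs_imp_tvs[OF lcs])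
  define q where "q \<tau> = p + (\<tau> * h) *\<^sub>R u" for \<tau>
  define \<psi> where "\<psi> \<tau> = (1 / h) *\<^sub>R (G (q \<tau>) - G p) - \<tau> *\<^sub>R L" for \<tau>
  have "((\<lambda>\<sigma>. (1 / \<sigma>) *\<^sub>R (\<psi> (\<tau> + \<sigma>) - \<psi> \<tau>)) \<longlongrightarrow> G' \<tau> - L) (at 0)" if "\<tau> \<in> {0..1}" for \<tau>
  proof -
    have lim: "((\<lambda>\<sigma>. (1 / (h * \<sigma>)) *\<^sub>R (G (q \<tau> + (h * \<sigma>) *\<^sub>R u) - G (q \<tau>)) - L) \<longlongrightarrow> G' \<tau> - L) (at 0)"
      using tendsto_compose_scale_at_0[OF der[OF that] \<open>h \<noteq> 0\<close>] unfolding q_def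
      by (intro tvs_tendsto_diff[OF tv] tendsto_const) simp
    have eq: "(1 / (h * \<sigma>)) *\<^sub>R (G (q \<tau> + (h * \<sigma>) *\<^sub>R u) - G (q \<tau>)) - L =
        (1 / \<sigma>) *\<^sub>R (\<psi> (\<tau> + \<sigma>) - \<psi> \<tau>)" if "\<sigma> \<noteq> 0" for \<sigma>
    proof -
      have "q (\<tau> + \<sigma>) = q \<tau> + (h * \<sigma>) *\<^sub>R u" unfolding q_def by (simp add: algebra_simps)
      then have "\<psi> (\<tau> + \<sigma>) - \<psi> \<tau> = (1 / h) *\<^sub>R (G (q \<tau> + (h * \<sigma>) *\<^sub>R u) - G (q \<tau>)) - \<sigma> *\<^sub>R L"
        unfolding \<psi>_def by (simp add: algebra_simps)
      then show ?thesis using that by (simp add: scaleR_diff_right mult.commute)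
    qed
    show ?thesis
      by (rule Lim_transform_eventually[OF lim]) (use eq in \<open>auto simp: eventually_at_filter\<close>)
  qed
  from lcs_mean_value_closure[OF lcs W this G'W] show ?thesis
    unfolding \<psi>_def q_def by simp
qed

lemma lcs_diffquot_tendsto_joint:
  fixes G :: "'w::{real_vector,t2_space} \<Rightarrow> 'v::{real_vector,t2_space}"
    and h :: "'b \<Rightarrow> real" and p u :: "'b \<Rightarrow> 'w"
  assumes lcs: "lcs_axioms TYPE('v)" and tw: "tvs_axioms TYPE('w)" and U: "open U" "p0 \<in> U"
    and der: "\<And>q \<eta>. q \<in> U \<Longrightarrow>
      ((\<lambda>\<sigma>. (1 / \<sigma>) *\<^sub>R (G (q + \<sigma> *\<^sub>R \<eta>) - G q)) \<longlongrightarrow> G' q \<eta>) (at 0)"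
    and cont: "\<And>E. open E \<Longrightarrow> G' p0 u0 \<in> E \<Longrightarrow> \<exists>Np Nu. open Np \<and> open Nu \<and> p0 \<in> Np \<and> u0 \<in> Nu \<and>
      (\<forall>p\<in>Np \<inter> U. \<forall>u\<in>Nu. G' p u \<in> E)"
    and lim: "(h \<longlongrightarrow> 0) F" "eventually (\<lambda>x. h x \<noteq> 0) F" "(p \<longlongrightarrow> p0) F" "(u \<longlongrightarrow> u0) F"
  shows "((\<lambda>x. (1 / h x) *\<^sub>R (G (p x + h x *\<^sub>R u x) - G (p x))) \<longlongrightarrow> G' p0 u0) F"
proof (rule topological_tendstoI)
  fix E assume E: "open E" "G' p0 u0 \<in> E"
  define L where "L = G' p0 u0"
  obtain W where W: "open W" "convex W" "0 \<in> W" "\<And>z. z \<in> closure W \<Longrightarrow> L + z \<in> E"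
    using lcs_convex_nhd_closure[OF lcs E] unfolding L_def by blast
  have "open {y. - L + y \<in> W}" by (rule lcs_open_translate[OF lcs W(1)])
  moreover have "G' p0 u0 \<in> {y. - L + y \<in> W}" using W(3) unfolding L_def by simp
  ultimately obtain Np Nu where N: "open Np" "open Nu" "p0 \<in> Np" "u0 \<in> Nu"
      "\<forall>p\<in>Np \<inter> U. \<forall>u\<in>Nu. G' p u \<in> {y. - L + y \<in> W}"
    by (metis cont)
  have p0: "p0 \<in> Np \<inter> U" using N(3) U(2) by blast
  obtain P \<delta> Q where PQ: "open P" "p0 \<in> P" "\<delta> > 0" "open Q" "u0 \<in> Q"
      "\<And>p s u. p \<in> P \<Longrightarrow> \<bar>s\<bar> < \<delta> \<Longrightarrow> u \<in> Q \<Longrightarrow> p + s *\<^sub>R u \<in> Np \<inter> U"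
    using tvs_segment_nhd[OF tw open_Int[OF N(1) U(1)] p0, where b = u0] by blast
  have "eventually (\<lambda>x. h x \<in> ball 0 \<delta>) F"
    using topological_tendstoD[OF lim(1) open_ball[of 0 \<delta>]] PQ(3) by simp
  moreover have "eventually (\<lambda>x. p x \<in> P) F"
    using topological_tendstoD[OF lim(3) PQ(1,2)] .
  moreover have "eventually (\<lambda>x. u x \<in> Q \<inter> Nu) F"
    using topological_tendstoD[OF lim(4) open_Int[OF PQ(4) N(2)]] PQ(5) N(4) by simp
  ultimately show "eventually (\<lambda>x. (1 / h x) *\<^sub>R (G (p x + h x *\<^sub>R u x) - G (p x)) \<in> E) F"
    using lim(2)
  proof eventually_elim
    case (elim x)
    have seg: "p x + (\<tau> * h x) *\<^sub>R u x \<in> Np \<inter> U" if "\<tau> \<in> {0..1}" for \<tau>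
    proof (rule PQ(6))
      have "\<bar>\<tau> * h x\<bar> \<le> \<bar>h x\<bar>"
        using that by (simp add: abs_mult mult_left_le_one_le)
      then show "\<bar>\<tau> * h x\<bar> < \<delta>" using elim(1) by (simp add: dist_real_def)
    qed (use elim(2,3) in simp_all)
    have "(1 / h x) *\<^sub>R (G (p x + h x *\<^sub>R u x) - G (p x)) - L \<in> closure W"
    proof (rule lcs_diffquot_in_closure[OF lcs W(2,1) elim(4)])
      fix \<tau> :: real assume "\<tau> \<in> {0..1}"
      then have "p x + (\<tau> * h x) *\<^sub>R u x \<in> Np \<inter> U" by (rule seg)
      then show "((\<lambda>\<sigma>. (1 / \<sigma>) *\<^sub>R (G (p x + (\<tau> * h x) *\<^sub>R u x + \<sigma> *\<^sub>R u x) - G (p x + (\<tau> * h x) *\<^sub>R u x)))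
          \<longlongrightarrow> G' (p x + (\<tau> * h x) *\<^sub>R u x) (u x)) (at 0)"
        and "G' (p x + (\<tau> * h x) *\<^sub>R u x) (u x) - L \<in> W"
        using der[of "p x + (\<tau> * h x) *\<^sub>R u x" "u x"] N(5) elim(3) by simp_all
    qed
    from W(4)[OF this] show ?case by simp
  qed
qed

lemma cont_multi_tendsto:
  assumes cm: "cont_multi U j \<Phi>" and v: "v \<in> U" and xs: "length xs = j"
    and p: "(p \<longlongrightarrow> v) F" and pU: "eventually (\<lambda>x. p x \<in> U) F"
    and ysl: "eventually (\<lambda>x. length (ys x) = j) F"
    and ys: "\<And>m. m < j \<Longrightarrow> ((\<lambda>x. ys x ! m) \<longlongrightarrow> xs ! m) F"
  shows "((\<lambda>x. \<Phi> (p x) (ys x)) \<longlongrightarrow> \<Phi> v xs) F"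
proof (rule topological_tendstoI)
  fix W assume W: "open W" "\<Phi> v xs \<in> W"
  have "\<exists>N Ns. open N \<and> v \<in> N \<and> length Ns = j \<and> (\<forall>i<j. open (Ns ! i) \<and> xs ! i \<in> Ns ! i) \<and>
      (\<forall>v'\<in>N \<inter> U. \<forall>ys. length ys = j \<and> (\<forall>i<j. ys ! i \<in> Ns ! i) \<longrightarrow> \<Phi> v' ys \<in> W)"
    using cm v xs W unfolding cont_multi_def by blast
  then obtain N Ns where N: "open N" "v \<in> N" "\<forall>i<j. open (Ns ! i) \<and> xs ! i \<in> Ns ! i"
      "\<forall>v'\<in>N \<inter> U. \<forall>ys. length ys = j \<and> (\<forall>i<j. ys ! i \<in> Ns ! i) \<longrightarrow> \<Phi> v' ys \<in> W"
    by blast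
  have "\<forall>m\<in>{..<j}. eventually (\<lambda>x. ys x ! m \<in> Ns ! m) F"
    using topological_tendstoD[OF ys] N(3) by blast
  then have "eventually (\<lambda>x. \<forall>m\<in>{..<j}. ys x ! m \<in> Ns ! m) F"
    by (intro eventually_ball_finite) auto
  moreover have "eventually (\<lambda>x. p x \<in> N) F" using topological_tendstoD[OF p N(1,2)] .
  ultimately show "eventually (\<lambda>x. \<Phi> (p x) (ys x) \<in> W) F"
    using pU ysl
  proof eventually_elim
    case (elim x)
    then show ?case using N(4) by auto
  qed
qed

lemma cont_multi_last_slot:
  assumes "cont_multi U (Suc i) \<Phi>" "v \<in> U" "length ys = i" "open E" "\<Phi> v (ys @ [u0]) \<in> E"
  shows "\<exists>Np Nu. open Np \<and> open Nu \<and> v \<in> Np \<and> u0 \<in> Nu \<and> (\<forall>p\<in>Np \<inter> U. \<forall>u\<in>Nu. \<Phi> p (ys @ [u]) \<in> E)"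
proof -
  have "\<exists>N Ns. open N \<and> v \<in> N \<and> length Ns = Suc i \<and>
      (\<forall>m<Suc i. open (Ns ! m) \<and> (ys @ [u0]) ! m \<in> Ns ! m) \<and>
      (\<forall>v'\<in>N \<inter> U. \<forall>zs. length zs = Suc i \<and> (\<forall>m<Suc i. zs ! m \<in> Ns ! m) \<longrightarrow> \<Phi> v' zs \<in> E)"
    using assms unfolding cont_multi_def by (metis length_append_singleton)
  then obtain N Ns where N: "open N" "v \<in> N" "\<forall>m<Suc i. open (Ns ! m) \<and> (ys @ [u0]) ! m \<in> Ns ! m"
      "\<forall>v'\<in>N \<inter> U. \<forall>zs. length zs = Suc i \<and> (\<forall>m<Suc i. zs ! m \<in> Ns ! m) \<longrightarrow> \<Phi> v' zs \<in> E"
    by blast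
  have "(ys @ [u]) ! m \<in> Ns ! m" if "u \<in> Ns ! i" "m < Suc i" for u m
    using N(3) that assms(3) by (cases "m < i") (auto simp: nth_append less_Suc_eq)
  then have "\<forall>p\<in>N \<inter> U. \<forall>u\<in>Ns ! i. \<Phi> p (ys @ [u]) \<in> E" using N(4) assms(3) by simp
  moreover have "open (Ns ! i)" "u0 \<in> Ns ! i" using N(3) assms(3) by (auto dest: spec[of _ i])
  ultimately show ?thesis using N(1,2) by blast
qed

definition multilinear_list :: "('w::real_vector list \<Rightarrow> 'v::real_vector) \<Rightarrow> nat \<Rightarrow> bool" where
  "multilinear_list \<Phi> i \<longleftrightarrow> (\<forall>l<i. \<forall>xs a b r. length xs = i \<longrightarrow>
      \<Phi> (xs[l := a + b]) = \<Phi> (xs[l := a]) + \<Phi> (xs[l := b]) \<and> \<Phi> (xs[l := r *\<^sub>R a]) = r *\<^sub>R \<Phi> (xs[l := a]))"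

lemma multilinear_listD:
  fixes \<Phi> :: "'w::real_vector list \<Rightarrow> 'v::real_vector"
  assumes "multilinear_list \<Phi> i" "l < i" "length xs = i"
  shows "\<Phi> (xs[l := a + b]) = \<Phi> (xs[l := a]) + \<Phi> (xs[l := b])"
    and "\<Phi> (xs[l := r *\<^sub>R a]) = r *\<^sub>R \<Phi> (xs[l := a])"
  using assms unfolding multilinear_list_def by blast+

lemma take_Suc_drop_Suc_eq_update:
  assumes "l < length xs" "length ys = length xs"
  shows "take (Suc l) ys @ drop (Suc l) xs = (take l ys @ drop l xs)[l := ys ! l]"
  using assms by (simp add: take_Suc_conv_app_nth Cons_nth_drop_Suc[symmetric] list_update_append)

lemma take_drop_update_self:
  assumes "l < length xs" "length ys = length xs"
  shows "(take l ys @ drop l xs)[l := xs ! l] = take l ys @ drop l xs"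
  using assms by (simp add: Cons_nth_drop_Suc[symmetric] list_update_append)

lemma nth_take_drop_update:
  assumes "l < length xs" "length ys = length xs" "m < length xs"
  shows "(take l ys @ drop l xs)[l := c] ! m = (if m = l then c else if m < l then ys ! m else xs ! m)"
  using assms by (auto simp: nth_list_update nth_append min_def)

lemma multilinear_list_diff_telescope:
  fixes \<Phi> :: "'w::real_vector list \<Rightarrow> 'v::real_vector"
  assumes "multilinear_list \<Phi> i" "length xs = i" "length ys = i"
  shows "\<Phi> xs - \<Phi> ys = (\<Sum>l<i. \<Phi> ((take l ys @ drop l xs)[l := xs ! l - ys ! l]))"
proof -
  define M where "M l = take l ys @ drop l xs" for l
  have step: "\<Phi> (M l) - \<Phi> (M (Suc l)) = \<Phi> ((M l)[l := xs ! l - ys ! l])" if "l < i" for l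
  proof -
    have "length (M l) = i" unfolding M_def using assms by simp
    from multilinear_listD(1)[OF assms(1) that this, of "xs ! l - ys ! l" "ys ! l"]
    have "\<Phi> ((M l)[l := xs ! l]) = \<Phi> ((M l)[l := xs ! l - ys ! l]) + \<Phi> ((M l)[l := ys ! l])"
      by simp
    moreover have "(M l)[l := xs ! l] = M l" "(M l)[l := ys ! l] = M (Suc l)"
      unfolding M_def using take_drop_update_self take_Suc_drop_Suc_eq_update[symmetric] that assms
      by auto
    ultimately show ?thesis by (simp add: algebra_simps)
  qed
  have "\<Phi> xs - \<Phi> ys = \<Phi> (M 0) - \<Phi> (M i)" unfolding M_def using assms by simp
  also have "\<dots> = (\<Sum>l<i. \<Phi> (M l) - \<Phi> (M (Suc l)))" by (rule sum_lessThan_telescope'[symmetric])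
  also have "\<dots> = (\<Sum>l<i. \<Phi> ((M l)[l := xs ! l - ys ! l]))" using step by simp
  finally show ?thesis unfolding M_def .
qed

lemma curve_derivs_0_iff:
  "curve_derivs 0 X x I \<longleftrightarrow> (\<forall>t\<in>I. X 0 t = x t) \<and> continuous_on I (X 0)"
  unfolding curve_derivs_def by auto

lemma curve_derivs_Suc_iff:
  "curve_derivs (Suc n) X x I \<longleftrightarrow>
     (\<forall>t\<in>I. X 0 t = x t) \<and> continuous_on I (X 0) \<and>
     (\<forall>t\<in>I. ((\<lambda>s. (1 / (s - t)) *\<^sub>R (X 0 s - X 0 t)) \<longlongrightarrow> X 1 t) (at t within I)) \<and>
     curve_derivs n (\<lambda>j. X (Suc j)) (X 1) I"
  unfolding curve_derivs_def less_Suc_eq_le[symmetric] All_less_Suc2 by auto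

lemma curve_derivs_mono: "curve_derivs n X x I \<Longrightarrow> m \<le> n \<Longrightarrow> curve_derivs m X x I"
  unfolding curve_derivs_def by auto

lemma curve_derivs_cong: "curve_derivs n X x I \<Longrightarrow> (\<And>s. s \<in> I \<Longrightarrow> y s = x s) \<Longrightarrow> curve_derivs n X y I"
  unfolding curve_derivs_def by auto

lemma curve_derivs_self: "curve_derivs n X x I \<Longrightarrow> curve_derivs n X (X 0) I"
  unfolding curve_derivs_def by auto

lemma curve_derivs_Pair:
  assumes "curve_derivs n X x I" "curve_derivs n Y y I"
  shows "curve_derivs n (\<lambda>j s. (X j s, Y j s)) (\<lambda>s. (x s, y s)) I"
  using assms unfolding curve_derivs_def
  by (auto intro!: tendsto_Pair continuous_on_Pair)

lemma curve_Ck_0_iff: "curve_Ck 0 x I \<longleftrightarrow> continuous_on I x"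
proof
  assume "curve_Ck 0 x I"
  then obtain X where "curve_derivs 0 X x I" unfolding curve_Ck_def by blast
  then show "continuous_on I x"
    unfolding curve_derivs_0_iff by (metis continuous_on_cong)
next
  assume "continuous_on I x"
  then have "curve_derivs 0 (\<lambda>_. x) x I" by (simp add: curve_derivs_0_iff)
  then show "curve_Ck 0 x I" unfolding curve_Ck_def by blast
qed

lemma curve_Ck_add:
  fixes x y :: "real \<Rightarrow> 'v::{real_vector,t2_space}"
  assumes tv: "tvs_axioms TYPE('v)" and "curve_Ck n x I" "curve_Ck n y I"
  shows "curve_Ck n (\<lambda>s. x s + y s) I"
proof -
  obtain X Y where XY: "curve_derivs n X x I" "curve_derivs n Y y I"
    using assms(2,3) unfolding curve_Ck_def by blast
  have "curve_derivs n (\<lambda>j s. X j s + Y j s) (\<lambda>s. x s + y s) I"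
    unfolding curve_derivs_def
  proof (intro conjI allI impI ballI)
    fix j t assume "j < n" "t \<in> I"
    then have "((\<lambda>s. (1 / (s - t)) *\<^sub>R (X j s - X j t) + (1 / (s - t)) *\<^sub>R (Y j s - Y j t))
        \<longlongrightarrow> X (Suc j) t + Y (Suc j) t) (at t within I)"
      using XY unfolding curve_derivs_def by (intro tvs_tendsto_add[OF tv]) auto
    then show "((\<lambda>s. (1 / (s - t)) *\<^sub>R (X j s + Y j s - (X j t + Y j t))) \<longlongrightarrow> X (Suc j) t + Y (Suc j) t)
        (at t within I)"
      by (simp add: algebra_simps)
  qed (use XY in \<open>auto simp: curve_derivs_def intro: tvs_continuous_on_add[OF tv]\<close>)
  then show ?thesis unfolding curve_Ck_def by blast
qed

lemma curve_Ck_minus: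
  fixes x :: "real \<Rightarrow> 'v::{real_vector,t2_space}"
  assumes tv: "tvs_axioms TYPE('v)" and "curve_Ck n x I"
  shows "curve_Ck n (\<lambda>s. - x s) I"
proof -
  obtain X where X: "curve_derivs n X x I" using assms(2) unfolding curve_Ck_def by blast
  have "curve_derivs n (\<lambda>j s. - X j s) (\<lambda>s. - x s) I"
    unfolding curve_derivs_def
  proof (intro conjI allI impI ballI)
    fix j t assume "j < n" "t \<in> I"
    then have "((\<lambda>s. - ((1 / (s - t)) *\<^sub>R (X j s - X j t))) \<longlongrightarrow> - X (Suc j) t) (at t within I)"
      using X unfolding curve_derivs_def by (intro tvs_tendsto_minus[OF tv]) auto
    then show "((\<lambda>s. (1 / (s - t)) *\<^sub>R (- X j s - - X j t)) \<longlongrightarrow> - X (Suc j) t) (at t within I)"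
      by (simp add: algebra_simps)
  qed (use X in \<open>auto simp: curve_derivs_def intro: tvs_continuous_on_minus[OF tv]\<close>)
  then show ?thesis unfolding curve_Ck_def by blast
qed

lemma curve_Ck_sum:
  fixes x :: "'i \<Rightarrow> real \<Rightarrow> 'v::{real_vector,t2_space}"
  assumes tv: "tvs_axioms TYPE('v)" and "finite S" "\<And>l. l \<in> S \<Longrightarrow> curve_Ck n (x l) I"
  shows "curve_Ck n (\<lambda>s. \<Sum>l\<in>S. x l s) I"
  using assms(2,3)
proof (induction S rule: finite_induct)
  case empty
  have "curve_derivs n (\<lambda>j s. 0) (\<lambda>s. 0 :: 'v) I" unfolding curve_derivs_def by auto
  then show ?case unfolding curve_Ck_def by auto
next
  case (insert a S)
  then show ?case by (simp add: curve_Ck_add[OF tv])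
qed

lemma curve_Ck_cong: "curve_Ck n x I \<Longrightarrow> (\<And>s. s \<in> I \<Longrightarrow> y s = x s) \<Longrightarrow> curve_Ck n y I"
  unfolding curve_Ck_def using curve_derivs_cong by blast

lemma curve_Ck_SucI:
  fixes f f' :: "real \<Rightarrow> 'v::{real_vector,t2_space}"
  assumes "continuous_on I f"
    and "\<And>t. t \<in> I \<Longrightarrow> ((\<lambda>s. (1 / (s - t)) *\<^sub>R (f s - f t)) \<longlongrightarrow> f' t) (at t within I)"
    and "curve_Ck n f' I"
  shows "curve_Ck (Suc n) f I"
proof -
  obtain Z where Z: "curve_derivs n Z f' I" using assms(3) unfolding curve_Ck_def by blast
  then have "\<forall>t\<in>I. Z 0 t = f' t" by (simp add: curve_derivs_def)
  then have "curve_derivs (Suc n) (case_nat f Z) f I"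
    using assms(1,2) curve_derivs_self[OF Z] unfolding curve_derivs_Suc_iff by (simp add: One_nat_def)
  then show ?thesis unfolding curve_Ck_def by blast
qed

locale Ck_derivatives =
  fixes U :: "'w::{real_vector,t2_space} set"
    and D :: "nat \<Rightarrow> 'w \<Rightarrow> 'w list \<Rightarrow> 'v::{real_vector,t2_space}"
    and k :: nat
  assumes lcs: "lcs_axioms TYPE('v)" and tvs_domain: "tvs_axioms TYPE('w)" and U: "open U"
    and derivative: "\<forall>j<k. \<forall>v\<in>U. \<forall>xs \<eta>. length xs = j \<longrightarrow>
        ((\<lambda>t::real. (1 / t) *\<^sub>R (D j (v + t *\<^sub>R \<eta>) xs - D j v xs)) \<longlongrightarrow> D (Suc j) v (xs @ [\<eta>])) (at 0)"
    and continuous: "\<forall>j\<le>k. cont_multi U j (D j)"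
begin

lemma tvs_codomain: "tvs_axioms TYPE('v)"
  by (rule lcs_imp_tvs[OF lcs])

lemma D_diffquot_tendsto:
  assumes "i < k" "v \<in> U" "length ys = i"
  shows "((\<lambda>t. (1 / t) *\<^sub>R (D i (v + t *\<^sub>R \<eta>) ys - D i v ys)) \<longlongrightarrow> D (Suc i) v (ys @ [\<eta>])) (at 0)"
  using derivative assms by blast

lemma D_diffquot_tendsto_joint:
  fixes h :: "'b \<Rightarrow> real" and p u :: "'b \<Rightarrow> 'w"
  assumes "i < k" "v \<in> U" "length ys = i"
    and "(h \<longlongrightarrow> 0) F" "eventually (\<lambda>x. h x \<noteq> 0) F" "(p \<longlongrightarrow> v) F" "(u \<longlongrightarrow> u0) F"
  shows "((\<lambda>x. (1 / h x) *\<^sub>R (D i (p x + h x *\<^sub>R u x) ys - D i (p x) ys)) \<longlongrightarrow> D (Suc i) v (ys @ [u0])) F"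
proof (rule lcs_diffquot_tendsto_joint[where G = "\<lambda>q. D i q ys" and U = U, OF lcs tvs_domain U assms(2)])
  show "((\<lambda>\<sigma>. (1 / \<sigma>) *\<^sub>R (D i (q + \<sigma> *\<^sub>R \<eta>) ys - D i q ys)) \<longlongrightarrow> D (Suc i) q (ys @ [\<eta>])) (at 0)"
    if "q \<in> U" for q \<eta>
    using D_diffquot_tendsto assms(1,3) that by blast
  show "\<exists>Np Nu. open Np \<and> open Nu \<and> v \<in> Np \<and> u0 \<in> Nu \<and> (\<forall>p\<in>Np \<inter> U. \<forall>u\<in>Nu. D (Suc i) p (ys @ [u]) \<in> E)"
    if "open E" "D (Suc i) v (ys @ [u0]) \<in> E" for E
    using cont_multi_last_slot[of U i "D (Suc i)"] continuous assms(1-3) that by simp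
qed (use assms(4-7) in auto)

lemma D_Suc_linear_last:
  assumes "i < k" "v \<in> U" "length ys = i"
  shows "D (Suc i) v (ys @ [a + b]) = D (Suc i) v (ys @ [a]) + D (Suc i) v (ys @ [b])"
    and "D (Suc i) v (ys @ [r *\<^sub>R a]) = r *\<^sub>R D (Suc i) v (ys @ [a])"
proof -
  define R where "R c t = (1 / t) *\<^sub>R (D i (v + t *\<^sub>R c) ys - D i v ys)" for c t
  have R: "(R c \<longlongrightarrow> D (Suc i) v (ys @ [c])) (at 0)" for c
    unfolding R_def by (rule D_diffquot_tendsto[OF assms])
  \<comment> \<open>the increment along \<open>a + b\<close> splits into one along \<open>a\<close> and one along \<open>b\<close> from a moving base point\<close>
  have "((\<lambda>t. (1 / t) *\<^sub>R (D i ((v + t *\<^sub>R a) + t *\<^sub>R b) ys - D i (v + t *\<^sub>R a) ys))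
      \<longlongrightarrow> D (Suc i) v (ys @ [b])) (at (0::real))"
  proof (rule D_diffquot_tendsto_joint[OF assms])
    have "((\<lambda>t. v + t *\<^sub>R a) \<longlongrightarrow> v + 0 *\<^sub>R a) (at (0::real))"
      by (intro tvs_tendsto_add[OF tvs_domain] tvs_tendsto_scaleR[OF tvs_domain] tendsto_const
          tendsto_ident_at)
    then show "((\<lambda>t. v + t *\<^sub>R a) \<longlongrightarrow> v) (at (0::real))" by simp
  qed (auto simp: eventually_at_filter intro: tendsto_ident_at)
  then have "((\<lambda>t. (1 / t) *\<^sub>R (D i ((v + t *\<^sub>R a) + t *\<^sub>R b) ys - D i (v + t *\<^sub>R a) ys) + R a t)
      \<longlongrightarrow> D (Suc i) v (ys @ [b]) + D (Suc i) v (ys @ [a])) (at 0)"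
    by (intro tvs_tendsto_add[OF tvs_codomain] R)
  then have "(R (a + b) \<longlongrightarrow> D (Suc i) v (ys @ [b]) + D (Suc i) v (ys @ [a])) (at 0)"
    by (rule Lim_transform_eventually[OF _ always_eventually])
      (simp add: R_def scaleR_diff_right scaleR_add_right add.assoc)
  with R[of "a + b"] show "D (Suc i) v (ys @ [a + b]) = D (Suc i) v (ys @ [a]) + D (Suc i) v (ys @ [b])"
    by (simp add: tendsto_unique[OF at_neq_bot] add.commute)
  show "D (Suc i) v (ys @ [r *\<^sub>R a]) = r *\<^sub>R D (Suc i) v (ys @ [a])"
  proof (cases "r = 0")
    case True
    have "(R 0 \<longlongrightarrow> 0) (at 0)" unfolding R_def by simp
    from tendsto_unique[OF at_neq_bot R[of 0] this] True show ?thesis by simp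
  next
    case False
    have "((\<lambda>t. r *\<^sub>R R a (r * t)) \<longlongrightarrow> r *\<^sub>R D (Suc i) v (ys @ [a])) (at 0)"
      by (intro tvs_tendsto_scaleR[OF tvs_codomain] tendsto_const tendsto_compose_scale_at_0 R False)
    then have "(R (r *\<^sub>R a) \<longlongrightarrow> r *\<^sub>R D (Suc i) v (ys @ [a])) (at 0)"
      by (rule Lim_transform_eventually)
        (use False in \<open>simp add: R_def always_eventually mult.commute\<close>)
    from tendsto_unique[OF at_neq_bot R this] show ?thesis .
  qed
qed

lemma D_Suc_linear_earlier:
  assumes "i < k" "v \<in> U" "length ys = i" "l < i"
    and lin: "\<And>w. w \<in> U \<Longrightarrow> multilinear_list (D i w) i"
  shows "D (Suc i) v (ys[l := a + b] @ [\<eta>]) = D (Suc i) v (ys[l := a] @ [\<eta>]) + D (Suc i) v (ys[l := b] @ [\<eta>])"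
    and "D (Suc i) v (ys[l := r *\<^sub>R a] @ [\<eta>]) = r *\<^sub>R D (Suc i) v (ys[l := a] @ [\<eta>])"
proof -
  define Q where "Q zs t = (1 / t) *\<^sub>R (D i (v + t *\<^sub>R \<eta>) zs - D i v zs)" for zs t
  have Q: "(Q (ys[l := c]) \<longlongrightarrow> D (Suc i) v (ys[l := c] @ [\<eta>])) (at 0)" for c
    unfolding Q_def using D_diffquot_tendsto[OF assms(1,2)] assms(3) by simp
  have line: "eventually (\<lambda>t. v + t *\<^sub>R \<eta> \<in> U) (at 0)"
    by (rule tvs_eventually_line_in_open[OF tvs_domain U assms(2)])
  have "eventually (\<lambda>t. Q (ys[l := a]) t + Q (ys[l := b]) t = Q (ys[l := a + b]) t) (at 0)"
    using line
  proof eventually_elim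
    case (elim t)
    show ?case using multilinear_listD(1)[OF lin[OF elim] assms(4,3)]
        multilinear_listD(1)[OF lin[OF assms(2)] assms(4,3)]
      unfolding Q_def by (simp add: algebra_simps)
  qed
  with tvs_tendsto_add[OF tvs_codomain Q Q]
  have "(Q (ys[l := a + b]) \<longlongrightarrow> D (Suc i) v (ys[l := a] @ [\<eta>]) + D (Suc i) v (ys[l := b] @ [\<eta>])) (at 0)"
    by (rule Lim_transform_eventually)
  from tendsto_unique[OF at_neq_bot Q this]
  show "D (Suc i) v (ys[l := a + b] @ [\<eta>]) = D (Suc i) v (ys[l := a] @ [\<eta>]) + D (Suc i) v (ys[l := b] @ [\<eta>])" .
  have "eventually (\<lambda>t. r *\<^sub>R Q (ys[l := a]) t = Q (ys[l := r *\<^sub>R a]) t) (at 0)"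
    using line
  proof eventually_elim
    case (elim t)
    show ?case using multilinear_listD(2)[OF lin[OF elim] assms(4,3)]
        multilinear_listD(2)[OF lin[OF assms(2)] assms(4,3)]
      unfolding Q_def by (simp add: algebra_simps)
  qed
  with tvs_tendsto_scaleR[OF tvs_codomain tendsto_const Q]
  have "(Q (ys[l := r *\<^sub>R a]) \<longlongrightarrow> r *\<^sub>R D (Suc i) v (ys[l := a] @ [\<eta>])) (at 0)"
    by (rule Lim_transform_eventually)
  from tendsto_unique[OF at_neq_bot Q this]
  show "D (Suc i) v (ys[l := r *\<^sub>R a] @ [\<eta>]) = r *\<^sub>R D (Suc i) v (ys[l := a] @ [\<eta>])" .
qed

lemma multilinear_D:
  assumes "i \<le> k" "v \<in> U"
  shows "multilinear_list (D i v) i"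
  using assms
proof (induction i arbitrary: v)
  case 0
  then show ?case by (simp add: multilinear_list_def)
next
  case (Suc m)
  show ?case
    unfolding multilinear_list_def
  proof (intro allI impI)
    fix l :: nat and xs :: "'w list" and a b :: 'w and r :: real
    assume "l < Suc m" "length xs = Suc m"
    then obtain ys \<eta> where xs: "xs = ys @ [\<eta>]" "length ys = m"
      by (metis length_Suc_conv_rev)
    show "D (Suc m) v (xs[l := a + b]) = D (Suc m) v (xs[l := a]) + D (Suc m) v (xs[l := b]) \<and>
        D (Suc m) v (xs[l := r *\<^sub>R a]) = r *\<^sub>R D (Suc m) v (xs[l := a])"
    proof (cases "l < m")
      case True
      then show ?thesis
        using D_Suc_linear_earlier[of m v ys l] Suc xs by (simp add: list_update_append)
    next
      case False
      then have "l = m" using \<open>l < Suc m\<close> by simp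
      then show ?thesis
        using D_Suc_linear_last[of m v ys] Suc xs by (simp add: list_update_append)
    qed
  qed
qed

lemma D_diffquot_along_base:
  assumes "i < k" "\<gamma> t \<in> U" "length cs = i"
    and \<gamma>': "((\<lambda>s. (1 / (s - t)) *\<^sub>R (\<gamma> s - \<gamma> t)) \<longlongrightarrow> \<gamma>') (at t within I)"
  shows "((\<lambda>s. (1 / (s - t)) *\<^sub>R (D i (\<gamma> s) cs - D i (\<gamma> t) cs)) \<longlongrightarrow> D (Suc i) (\<gamma> t) (cs @ [\<gamma>'])) (at t within I)"
proof -
  have "((\<lambda>s. s - t) \<longlongrightarrow> t - t) (at t within I)" by (intro tendsto_intros)
  then have "((\<lambda>s. s - t) \<longlongrightarrow> 0) (at t within I)" by simp
  moreover have "eventually (\<lambda>s. s - t \<noteq> 0) (at t within I)" by (auto simp: eventually_at_filter)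
  ultimately have "((\<lambda>s. (1 / (s - t)) *\<^sub>R
      (D i (\<gamma> t + (s - t) *\<^sub>R ((1 / (s - t)) *\<^sub>R (\<gamma> s - \<gamma> t))) cs - D i (\<gamma> t) cs))
      \<longlongrightarrow> D (Suc i) (\<gamma> t) (cs @ [\<gamma>'])) (at t within I)"
    by (rule D_diffquot_tendsto_joint[OF assms(1-3) _ _ tendsto_const \<gamma>'])
  then show ?thesis
    by (rule Lim_transform_eventually) (auto simp: eventually_at_filter)
qed

lemma D_diffquot_along_args:
  fixes \<gamma> :: "real \<Rightarrow> 'w" and c :: "real \<Rightarrow> 'w list"
  assumes "i \<le> k" "t \<in> I" and \<gamma>U: "\<And>s. s \<in> I \<Longrightarrow> \<gamma> s \<in> U" and \<gamma>: "(\<gamma> \<longlongrightarrow> \<gamma> t) (at t within I)"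
    and len: "\<And>s. length (c s) = i" "length c' = i"
    and c: "\<And>l. l < i \<Longrightarrow> ((\<lambda>s. c s ! l) \<longlongrightarrow> c t ! l) (at t within I)"
    and c': "\<And>l. l < i \<Longrightarrow> ((\<lambda>s. (1 / (s - t)) *\<^sub>R (c s ! l - c t ! l)) \<longlongrightarrow> c' ! l) (at t within I)"
  shows "((\<lambda>s. (1 / (s - t)) *\<^sub>R (D i (\<gamma> s) (c s) - D i (\<gamma> s) (c t))) \<longlongrightarrow>
      (\<Sum>l<i. D i (\<gamma> t) ((c t)[l := c' ! l]))) (at t within I)"
proof -
  let ?F = "at t within I"
  define T where "T l s = (take l (c t) @ drop l (c s))[l := (1 / (s - t)) *\<^sub>R (c s ! l - c t ! l)]"
    for l s
  have T: "((\<lambda>s. D i (\<gamma> s) (T l s)) \<longlongrightarrow> D i (\<gamma> t) ((c t)[l := c' ! l])) ?F" if "l < i" for l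
  proof (rule cont_multi_tendsto[where U = U])
    show "cont_multi U i (D i)" using continuous \<open>i \<le> k\<close> by simp
    show "eventually (\<lambda>s. \<gamma> s \<in> U) ?F" by (auto simp: eventually_at_filter \<gamma>U)
    show "((\<lambda>s. T l s ! m) \<longlongrightarrow> (c t)[l := c' ! l] ! m) ?F" if "m < i" for m
    proof -
      have "T l s ! m = (if m = l then (1 / (s - t)) *\<^sub>R (c s ! l - c t ! l)
          else if m < l then c t ! m else c s ! m)" for s
        unfolding T_def using nth_take_drop_update[of l "c s" "c t" m] len \<open>l < i\<close> that by simp
      then show ?thesis
        using c c' \<open>l < i\<close> that len by (cases "m < l") (auto simp: nth_list_update)
    qed
  qed (use \<gamma>U \<open>t \<in> I\<close> \<gamma> len \<open>l < i\<close> in \<open>simp_all add: T_def\<close>)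
  have lim: "((\<lambda>s. \<Sum>l<i. D i (\<gamma> s) (T l s)) \<longlongrightarrow> (\<Sum>l<i. D i (\<gamma> t) ((c t)[l := c' ! l]))) ?F"
    by (rule tvs_tendsto_sum[OF tvs_codomain]) (use T in auto)
  have eq: "(\<Sum>l<i. D i (\<gamma> s) (T l s)) = (1 / (s - t)) *\<^sub>R (D i (\<gamma> s) (c s) - D i (\<gamma> s) (c t))"
    if "s \<in> I" for s
  proof -
    have lin: "multilinear_list (D i (\<gamma> s)) i" by (rule multilinear_D[OF \<open>i \<le> k\<close> \<gamma>U[OF that]])
    have "D i (\<gamma> s) (T l s) = (1 / (s - t)) *\<^sub>R D i (\<gamma> s) ((take l (c t) @ drop l (c s))[l := c s ! l - c t ! l])"
      if "l < i" for l
      using multilinear_listD(2)[OF lin that] len unfolding T_def by simp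
    then show ?thesis
      using multilinear_list_diff_telescope[OF lin len(1,1)] by (simp add: scaleR_sum_right)
  qed
  show ?thesis
    by (rule Lim_transform_eventually[OF lim]) (use eq in \<open>auto simp: eventually_at_filter\<close>)
qed

lemma D_diffquot_along:
  fixes \<gamma> :: "real \<Rightarrow> 'w" and c :: "real \<Rightarrow> 'w list"
  assumes "i < k" "t \<in> I" and \<gamma>U: "\<And>s. s \<in> I \<Longrightarrow> \<gamma> s \<in> U" and \<gamma>: "(\<gamma> \<longlongrightarrow> \<gamma> t) (at t within I)"
    and \<gamma>': "((\<lambda>s. (1 / (s - t)) *\<^sub>R (\<gamma> s - \<gamma> t)) \<longlongrightarrow> \<gamma>') (at t within I)"
    and len: "\<And>s. length (c s) = i" "length c' = i"
    and c: "\<And>l. l < i \<Longrightarrow> ((\<lambda>s. c s ! l) \<longlongrightarrow> c t ! l) (at t within I)"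
    and c': "\<And>l. l < i \<Longrightarrow> ((\<lambda>s. (1 / (s - t)) *\<^sub>R (c s ! l - c t ! l)) \<longlongrightarrow> c' ! l) (at t within I)"
  shows "((\<lambda>s. (1 / (s - t)) *\<^sub>R (D i (\<gamma> s) (c s) - D i (\<gamma> t) (c t))) \<longlongrightarrow>
      D (Suc i) (\<gamma> t) (c t @ [\<gamma>']) + (\<Sum>l<i. D i (\<gamma> t) ((c t)[l := c' ! l]))) (at t within I)"
proof -
  have "((\<lambda>s. (1 / (s - t)) *\<^sub>R (D i (\<gamma> s) (c t) - D i (\<gamma> t) (c t)) +
      (1 / (s - t)) *\<^sub>R (D i (\<gamma> s) (c s) - D i (\<gamma> s) (c t))) \<longlongrightarrow>
      D (Suc i) (\<gamma> t) (c t @ [\<gamma>']) + (\<Sum>l<i. D i (\<gamma> t) ((c t)[l := c' ! l]))) (at t within I)"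
    using assms by (intro tvs_tendsto_add[OF tvs_codomain] D_diffquot_along_base D_diffquot_along_args)
      auto
  then show ?thesis by (simp add: scaleR_diff_right)
qed

lemma D_diffquot_along_curves:
  fixes \<Gamma> :: "nat \<Rightarrow> real \<Rightarrow> 'w" and Cs :: "(nat \<Rightarrow> real \<Rightarrow> 'w) list"
  assumes "i < k" "t \<in> I" "length Cs = i" "\<And>s. s \<in> I \<Longrightarrow> \<Gamma> 0 s \<in> U" "curve_derivs 1 \<Gamma> (\<Gamma> 0) I"
    and "\<And>C. C \<in> set Cs \<Longrightarrow> curve_derivs 1 C (C 0) I"
  shows "((\<lambda>s. (1 / (s - t)) *\<^sub>R (D i (\<Gamma> 0 s) (map (\<lambda>C. C 0 s) Cs) - D i (\<Gamma> 0 t) (map (\<lambda>C. C 0 t) Cs)))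
      \<longlongrightarrow> D (Suc i) (\<Gamma> 0 t) (map (\<lambda>C. C 0 t) (Cs @ [\<lambda>j. \<Gamma> (Suc j)])) +
        (\<Sum>l<i. D i (\<Gamma> 0 t) (map (\<lambda>C. C 0 t) (Cs[l := \<lambda>j. (Cs ! l) (Suc j)])))) (at t within I)"
proof -
  have "((\<lambda>s. (1 / (s - t)) *\<^sub>R (D i (\<Gamma> 0 s) (map (\<lambda>C. C 0 s) Cs) - D i (\<Gamma> 0 t) (map (\<lambda>C. C 0 t) Cs)))
      \<longlongrightarrow> D (Suc i) (\<Gamma> 0 t) (map (\<lambda>C. C 0 t) Cs @ [\<Gamma> 1 t]) +
        (\<Sum>l<i. D i (\<Gamma> 0 t) ((map (\<lambda>C. C 0 t) Cs)[l := map (\<lambda>C. C 1 t) Cs ! l]))) (at t within I)"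
  proof (rule D_diffquot_along[OF assms(1,2,4)])
    show "(\<Gamma> 0 \<longlongrightarrow> \<Gamma> 0 t) (at t within I)"
      using assms(2,5) by (auto simp: curve_derivs_def continuous_on_def)
  qed (use assms in \<open>auto simp: curve_derivs_def continuous_on_def\<close>)
  then show ?thesis using assms(3) by (simp add: map_update)
qed

lemma continuous_on_D_along_curves:
  fixes \<gamma> :: "real \<Rightarrow> 'w" and c :: "real \<Rightarrow> 'w list"
  assumes "i \<le> k" "\<And>s. s \<in> I \<Longrightarrow> \<gamma> s \<in> U" "continuous_on I \<gamma>" "\<And>s. length (c s) = i"
    and "\<And>l. l < i \<Longrightarrow> continuous_on I (\<lambda>s. c s ! l)"
  shows "continuous_on I (\<lambda>s. D i (\<gamma> s) (c s))"
  unfolding continuous_on_def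
proof
  fix t assume "t \<in> I"
  show "((\<lambda>s. D i (\<gamma> s) (c s)) \<longlongrightarrow> D i (\<gamma> t) (c t)) (at t within I)"
  proof (rule cont_multi_tendsto[where U = U])
    show "cont_multi U i (D i)" using continuous \<open>i \<le> k\<close> by simp
    show "eventually (\<lambda>s. \<gamma> s \<in> U) (at t within I)"
      using assms(2) by (auto simp: eventually_at_filter)
  qed (use assms \<open>t \<in> I\<close> in \<open>auto simp: continuous_on_def\<close>)
qed

text \<open>Differentiating \<open>s \<mapsto> D i (\<Gamma> s) (C\<^sub>1 s, \<dots>, C\<^sub>i s)\<close> gives terms of the same shape, with
  one more derivative on one of the curves or one more order on \<open>D\<close>; hence induction on \<open>n\<close>
  under the budget \<open>i + n \<le> k\<close>.\<close>

lemma curve_Ck_D_along_curves: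
  fixes \<Gamma> :: "nat \<Rightarrow> real \<Rightarrow> 'w" and Cs :: "(nat \<Rightarrow> real \<Rightarrow> 'w) list"
  assumes "i + n \<le> k" "length Cs = i" "\<And>s. s \<in> I \<Longrightarrow> \<Gamma> 0 s \<in> U" "curve_derivs n \<Gamma> (\<Gamma> 0) I"
    and "\<And>C. C \<in> set Cs \<Longrightarrow> curve_derivs n C (C 0) I"
  shows "curve_Ck n (\<lambda>s. D i (\<Gamma> 0 s) (map (\<lambda>C. C 0 s) Cs)) I"
  using assms
proof (induction n arbitrary: i Cs)
  case 0
  then have "continuous_on I (\<lambda>s. D i (\<Gamma> 0 s) (map (\<lambda>C. C 0 s) Cs))"
    by (intro continuous_on_D_along_curves) (auto simp: curve_derivs_0_iff)
  then show ?case by (simp add: curve_Ck_0_iff)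
next
  case (Suc n)
  have curves: "curve_derivs n C (C 0) I" "curve_derivs n (\<lambda>j. C (Suc j)) (C 1) I"
      "curve_derivs 1 C (C 0) I"
    if "C \<in> insert \<Gamma> (set Cs)" for C
  proof -
    have C: "curve_derivs (Suc n) C (C 0) I" using that Suc.prems by auto
    then show "curve_derivs n C (C 0) I" "curve_derivs 1 C (C 0) I"
      by (rule curve_derivs_mono; simp)+
    show "curve_derivs n (\<lambda>j. C (Suc j)) (C 1) I" using C by (simp add: curve_derivs_Suc_iff)
  qed
  have "curve_Ck n (\<lambda>s. D (Suc i) (\<Gamma> 0 s) (map (\<lambda>C. C 0 s) (Cs @ [\<lambda>j. \<Gamma> (Suc j)]))) I"
    using Suc.prems curves by (intro Suc.IH) auto
  moreover have "curve_Ck n (\<lambda>s. D i (\<Gamma> 0 s) (map (\<lambda>C. C 0 s) (Cs[l := \<lambda>j. (Cs ! l) (Suc j)]))) I"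
    if "l < i" for l
    using Suc.prems curves that by (intro Suc.IH) (auto dest!: set_update_subset_insert[THEN subsetD])
  ultimately have derivative: "curve_Ck n (\<lambda>s. D (Suc i) (\<Gamma> 0 s) (map (\<lambda>C. C 0 s) (Cs @ [\<lambda>j. \<Gamma> (Suc j)])) +
      (\<Sum>l<i. D i (\<Gamma> 0 s) (map (\<lambda>C. C 0 s) (Cs[l := \<lambda>j. (Cs ! l) (Suc j)])))) I"
    by (intro curve_Ck_add[OF tvs_codomain] curve_Ck_sum[OF tvs_codomain]) auto
  show ?case
  proof (rule curve_Ck_SucI[OF _ _ derivative])
    show "continuous_on I (\<lambda>s. D i (\<Gamma> 0 s) (map (\<lambda>C. C 0 s) Cs))"
      using Suc.prems curves by (intro continuous_on_D_along_curves) (auto simp: curve_derivs_def)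
  qed (use Suc.prems curves in \<open>intro D_diffquot_along_curves; auto\<close>)
qed

end

lemma connection_Ck_curve_Ck:
  fixes A :: "'a::{real_vector,t2_space} \<Rightarrow> 'a \<Rightarrow> 'a \<Rightarrow> 'a"
  assumes lcs: "lcs_axioms TYPE('a)" and "open \<Omega>" "connection_Ck k \<Omega> A" "n \<le> k"
    and "\<And>s. s \<in> I \<Longrightarrow> X 0 s \<in> \<Omega>"
    and "curve_derivs n X (X 0) I" "curve_derivs n Y (Y 0) I" "curve_derivs n W (W 0) I"
  shows "curve_Ck n (\<lambda>s. A (X 0 s) (Y 0 s) (W 0 s)) I"
proof -
  have tvs: "tvs_axioms TYPE('a)" by (rule lcs_imp_tvs[OF lcs])
  obtain D :: "nat \<Rightarrow> 'a \<times> 'a \<times> 'a \<Rightarrow> ('a \<times> 'a \<times> 'a) list \<Rightarrow> 'a" where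
    D0: "\<forall>v\<in>\<Omega> \<times> UNIV \<times> UNIV. D 0 v [] = (\<lambda>(v, \<xi>, w). A v \<xi> w) v" and
    derivative: "\<forall>j<k. \<forall>v\<in>\<Omega> \<times> UNIV \<times> UNIV. \<forall>xs \<eta>. length xs = j \<longrightarrow>
      ((\<lambda>t::real. (1 / t) *\<^sub>R (D j (v + t *\<^sub>R \<eta>) xs - D j v xs)) \<longlongrightarrow> D (Suc j) v (xs @ [\<eta>])) (at 0)" and
    continuous: "\<forall>j\<le>k. cont_multi (\<Omega> \<times> UNIV \<times> UNIV) j (D j)"
    using assms(3) unfolding connection_Ck_def Ck_def by blast
  interpret Ck_derivatives "\<Omega> \<times> UNIV \<times> UNIV" D k
    using lcs tvs_axioms_prod[OF tvs tvs_axioms_prod[OF tvs tvs]] open_Times[OF assms(2) open_UNIV]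
      derivative continuous
    by unfold_locales auto
  define \<Gamma> where "\<Gamma> j s = (X j s, Y j s, W j s)" for j s
  have \<Gamma>: "curve_derivs n \<Gamma> (\<Gamma> 0) I"
    unfolding \<Gamma>_def using assms(6-8) by (intro curve_derivs_Pair)
  have \<Gamma>_in: "\<And>s. s \<in> I \<Longrightarrow> \<Gamma> 0 s \<in> \<Omega> \<times> UNIV \<times> UNIV" using assms(5) by (simp add: \<Gamma>_def)
  have "curve_Ck n (\<lambda>s. D 0 (\<Gamma> 0 s) (map (\<lambda>C. C 0 s) ([] :: (nat \<Rightarrow> real \<Rightarrow> _) list))) I"
    by (rule curve_Ck_D_along_curves[OF _ _ \<Gamma>_in \<Gamma>]) (use assms(4) in auto)
  then show ?thesis
    by (rule curve_Ck_cong) (use D0 assms(5) in \<open>auto simp: \<Gamma>_def\<close>)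
qed

lemma second_order_ode_step:
  fixes F :: "'v::{real_vector,t2_space} \<Rightarrow> 'v \<Rightarrow> 'v"
  assumes F: "\<And>X Y. (\<And>s. s \<in> I \<Longrightarrow> X 0 s \<in> S) \<Longrightarrow> curve_derivs (Suc n) X (X 0) I \<Longrightarrow>
      curve_derivs (Suc n) Y (Y 0) I \<Longrightarrow> curve_Ck (Suc n) (\<lambda>s. F (X 0 s) (Y 0 s)) I"
    and X: "curve_derivs (Suc (Suc n)) X x I" and S: "\<And>t. t \<in> I \<Longrightarrow> x t \<in> S"
    and ode: "\<And>t. t \<in> I \<Longrightarrow> X 2 t = F (x t) (X 1 t)"
  shows "\<exists>X'. curve_derivs (Suc (Suc (Suc n))) X' x I \<and> (\<forall>t\<in>I. X' 2 t = F (x t) (X' 1 t))"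
proof -
  have X0: "\<And>t. t \<in> I \<Longrightarrow> X 0 t = x t" using X by (simp add: curve_derivs_def)
  have X': "curve_derivs (Suc n) (\<lambda>j. X (Suc j)) (X 1) I" using X by (simp add: curve_derivs_Suc_iff)
  have "curve_derivs (Suc n) X (X 0) I" using curve_derivs_self[OF curve_derivs_mono[OF X]] by simp
  then obtain Z where Z: "curve_derivs (Suc n) Z (\<lambda>s. F (X 0 s) (X 1 s)) I"
    using F[of X "\<lambda>j. X (Suc j)"] S X0 X' unfolding curve_Ck_def by auto
  \<comment> \<open>replace the second derivative and everything above it by the derivatives of \<open>F(x, x')\<close>\<close>
  define X2 where "X2 j = (case j of 0 \<Rightarrow> X 1 | Suc j \<Rightarrow> Z j)" for j
  have "\<forall>t\<in>I. Z 0 t = X 2 t" using Z X0 ode by (simp add: curve_derivs_def)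
  then have "curve_derivs (Suc (Suc n)) X2 (X 1) I"
    using X' curve_derivs_self[OF Z] unfolding curve_derivs_Suc_iff X2_def
    by (simp add: numeral_2_eq_2)
  moreover have "continuous_on I (X 0)"
    "\<forall>t\<in>I. ((\<lambda>s. (1 / (s - t)) *\<^sub>R (X 0 s - X 0 t)) \<longlongrightarrow> X 1 t) (at t within I)"
    using X unfolding curve_derivs_Suc_iff by blast+
  ultimately have "curve_derivs (Suc (Suc (Suc n))) (case_nat (X 0) X2) x I"
    using X0 unfolding curve_derivs_Suc_iff[of "Suc (Suc n)"] X2_def by (simp add: One_nat_def)
  moreover have "\<forall>t\<in>I. case_nat (X 0) X2 2 t = F (x t) (case_nat (X 0) X2 1 t)"
    using X0 Z unfolding X2_def by (simp add: numeral_2_eq_2 curve_derivs_def)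
  ultimately show ?thesis by blast
qed

lemma second_order_ode_regularity:
  fixes F :: "'v::{real_vector,t2_space} \<Rightarrow> 'v \<Rightarrow> 'v"
  assumes F: "\<And>n X Y. n \<le> k \<Longrightarrow> (\<And>s. s \<in> I \<Longrightarrow> X 0 s \<in> S) \<Longrightarrow> curve_derivs n X (X 0) I \<Longrightarrow>
      curve_derivs n Y (Y 0) I \<Longrightarrow> curve_Ck n (\<lambda>s. F (X 0 s) (Y 0 s)) I"
    and X: "curve_derivs 2 X x I" and S: "\<And>t. t \<in> I \<Longrightarrow> x t \<in> S"
    and ode: "\<And>t. t \<in> I \<Longrightarrow> X 2 t = F (x t) (X 1 t)"
  shows "curve_Ck (k + 2) x I"
proof -
  have "\<exists>X. curve_derivs (Suc (Suc n)) X x I \<and> (\<forall>t\<in>I. X 2 t = F (x t) (X 1 t))" if "n \<le> k" for n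
    using that
  proof (induction n)
    case 0
    then show ?case using X ode by (auto simp: numeral_2_eq_2)
  next
    case (Suc n)
    then obtain X where X: "curve_derivs (Suc (Suc n)) X x I" "\<forall>t\<in>I. X 2 t = F (x t) (X 1 t)" by auto
    show ?case
    proof (rule second_order_ode_step[OF _ X(1) S])
      fix Y Z :: "nat \<Rightarrow> real \<Rightarrow> 'v"
      assume "\<And>s. s \<in> I \<Longrightarrow> Y 0 s \<in> S" "curve_derivs (Suc n) Y (Y 0) I" "curve_derivs (Suc n) Z (Z 0) I"
      then show "curve_Ck (Suc n) (\<lambda>s. F (Y 0 s) (Z 0 s)) I" by (rule F[OF Suc.prems])
    qed (use X(2) in auto)
  qed
  from this[of k] show ?thesis unfolding curve_Ck_def add_2_eq_Suc' by blast
qed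

theorem lemma6p2:
  fixes \<Omega> :: "'a::{real_vector,t2_space} set"
    and g :: "'a \<Rightarrow> 'a \<Rightarrow> 'a \<Rightarrow> real"
    and A :: "'a \<Rightarrow> 'a \<Rightarrow> 'a \<Rightarrow> 'a"
    and k :: nat
    and I :: "real set"
    and x :: "real \<Rightarrow> 'a"
  assumes "lcs_axioms TYPE('a)"
    and "open \<Omega>"
    and "riemannian_metric \<Omega> g"
    and "metric_Ck 1 \<Omega> g"
    and "levi_civita \<Omega> g A"
    and "connection_Ck k \<Omega> A"
    and "k \<ge> 1"
    and "geodesic \<Omega> A I x"
  shows "curve_Ck (k + 2) x I"
proof -
  obtain X where X: "curve_derivs 2 X x I" "\<forall>t\<in>I. x t \<in> \<Omega>"
    and geodesic_eq: "\<forall>t\<in>I. X 2 t + A (x t) (X 1 t) (X 1 t) = 0"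
    using assms(8) unfolding geodesic_def by blast
  show ?thesis
  proof (rule second_order_ode_regularity[where F = "\<lambda>v \<xi>. - A v \<xi> \<xi>" and S = \<Omega>, OF _ X(1)])
    show "curve_Ck n (\<lambda>s. - A (Y 0 s) (Z 0 s) (Z 0 s)) I"
      if "n \<le> k" "\<And>s. s \<in> I \<Longrightarrow> Y 0 s \<in> \<Omega>" "curve_derivs n Y (Y 0) I" "curve_derivs n Z (Z 0) I"
      for n Y Z
      using that connection_Ck_curve_Ck[OF assms(1,2,6)]
      by (intro curve_Ck_minus[OF lcs_imp_tvs[OF assms(1)]]) blast
  qed (use X(2) geodesic_eq in \<open>auto simp: eq_neg_iff_add_eq_0\<close>)
qed

end
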